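(* Let $R\cong \prod_{i=1}^{n} D_{i}$ be a finite direct product of rings where each $D_{i}$ is either a Dedekind domain or an Artinian, local principal ideal ring (equivalently, $R$ is a multiplication ring with finitely many minimal prime ideals), and let $1=e_1+\cdots+e_n$ be the corresponding decomposition into central orthogonal idempotents. Let $M$ be an $R$-module and $M_i:=e_iM$, so $M=\bigoplus_{i=1}^n M_i$. Then $M$ is a faithful multiplication $R$-module if and only if for each $i=1,\ldots,n$, either $M_i\cong D_i$, or $D_i$ is a Dedekind domain and $M_i\cong I_i$ for some nonzero ideal $I_i$ of $D_i$.
   Context: All rings are commutative with $1$ and all modules are unital. A ring $R$ is a multiplication ring if whenever $I,J$ are ideals of $R$ with $J\subseteq I$, there is an ideal $I'$ of $R$ with $J=I'I$. An $R$-module $M$ is a multiplication module if every submodule of $M$ equals $IM$ for some ideal $I$ of $R$. $M$ is faithful if its annihilator $\mathrm{ann}_R(M)=\{r\in R: rM=0\}$ is $0$. *)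

theory Defs
  imports Complex_Main
begin

text \<open>Ring-theoretic notions for the ring D = e R (a direct factor of the commutative
ring R, with identity the idempotent e), computed inside R.\<close>

definition factor_ring :: "'a::comm_ring_1 \<Rightarrow> 'a set" where
  "factor_ring e = {e * r | r. True}"

definition ideal_in :: "'a::comm_ring_1 set \<Rightarrow> 'a set \<Rightarrow> bool" where
  "ideal_in D I \<longleftrightarrow> I \<subseteq> D \<and> 0 \<in> I \<and> (\<forall>x\<in>I. \<forall>y\<in>I. x + y \<in> I)
      \<and> (\<forall>r\<in>D. \<forall>x\<in>I. r * x \<in> I)"

definition ideal_gen_in :: "'a::comm_ring_1 set \<Rightarrow> 'a set \<Rightarrow> 'a set" where
  "ideal_gen_in D F = {x. \<exists>c. (\<forall>f\<in>F. c f \<in> D) \<and> x = (\<Sum>f\<in>F. c f * f)}"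

definition prime_ideal_in :: "'a::comm_ring_1 set \<Rightarrow> 'a set \<Rightarrow> bool" where
  "prime_ideal_in D P \<longleftrightarrow> ideal_in D P \<and> P \<noteq> D
      \<and> (\<forall>a\<in>D. \<forall>b\<in>D. a * b \<in> P \<longrightarrow> a \<in> P \<or> b \<in> P)"

definition maximal_ideal_in :: "'a::comm_ring_1 set \<Rightarrow> 'a set \<Rightarrow> bool" where
  "maximal_ideal_in D M \<longleftrightarrow> ideal_in D M \<and> M \<noteq> D
      \<and> (\<forall>J. ideal_in D J \<and> M \<subseteq> J \<longrightarrow> J = M \<or> J = D)"

definition is_domain_at :: "'a::comm_ring_1 \<Rightarrow> bool" where
  "is_domain_at e \<longleftrightarrow> e \<noteq> 0 \<and>
     (\<forall>a\<in>factor_ring e. \<forall>b\<in>factor_ring e. a * b = 0 \<longrightarrow> a = 0 \<or> b = 0)"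

definition noetherian_at :: "'a::comm_ring_1 \<Rightarrow> bool" where
  "noetherian_at e \<longleftrightarrow> (\<forall>I. ideal_in (factor_ring e) I \<longrightarrow>
     (\<exists>F. finite F \<and> F \<subseteq> I \<and> I = ideal_gen_in (factor_ring e) F))"

text \<open>Integrally closed in its field of fractions: if a/b (b nonzero) satisfies a monic
polynomial over D, i.e. a^n + c_1 a^(n-1) b + ... + c_n b^n = 0, then a/b lies in D.\<close>
definition integrally_closed_at :: "'a::comm_ring_1 \<Rightarrow> bool" where
  "integrally_closed_at e \<longleftrightarrow> (\<forall>a\<in>factor_ring e. \<forall>b\<in>factor_ring e. b \<noteq> 0 \<longrightarrow>
     (\<exists>n>0. \<exists>c. (\<forall>j. c j \<in> factor_ring e) \<and>
         a ^ n + (\<Sum>j\<in>{1..n}. c j * a ^ (n - j) * b ^ j) = 0) \<longrightarrow>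
     (\<exists>d\<in>factor_ring e. a = d * b))"

definition dedekind_at :: "'a::comm_ring_1 \<Rightarrow> bool" where
  "dedekind_at e \<longleftrightarrow> is_domain_at e \<and> noetherian_at e \<and> integrally_closed_at e \<and>
     (\<forall>P. prime_ideal_in (factor_ring e) P \<and> P \<noteq> {0} \<longrightarrow> maximal_ideal_in (factor_ring e) P)"

definition artinian_at :: "'a::comm_ring_1 \<Rightarrow> bool" where
  "artinian_at e \<longleftrightarrow> (\<forall>f :: nat \<Rightarrow> 'a set. (\<forall>k. ideal_in (factor_ring e) (f k)) \<and>
     (\<forall>k. f (Suc k) \<subseteq> f k) \<longrightarrow> (\<exists>N. \<forall>k\<ge>N. f k = f N))"

definition local_at :: "'a::comm_ring_1 \<Rightarrow> bool" where
  "local_at e \<longleftrightarrow> (\<exists>!M. maximal_ideal_in (factor_ring e) M)"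

definition pir_at :: "'a::comm_ring_1 \<Rightarrow> bool" where
  "pir_at e \<longleftrightarrow> (\<forall>I. ideal_in (factor_ring e) I \<longrightarrow>
     (\<exists>a\<in>factor_ring e. I = {d * a | d. d \<in> factor_ring e}))"

definition artinian_local_pir_at :: "'a::comm_ring_1 \<Rightarrow> bool" where
  "artinian_local_pir_at e \<longleftrightarrow> artinian_at e \<and> local_at e \<and> pir_at e"

definition ideal :: "'a::comm_ring_1 set \<Rightarrow> bool" where
  "ideal I \<longleftrightarrow> ideal_in UNIV I"

definition faithful_module :: "('a::comm_ring_1 \<Rightarrow> 'm::ab_group_add \<Rightarrow> 'm) \<Rightarrow> bool" where
  "faithful_module scale \<longleftrightarrow> (\<forall>r. (\<forall>m. scale r m = 0) \<longrightarrow> r = 0)"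

definition multiplication_module :: "('a::comm_ring_1 \<Rightarrow> 'm::ab_group_add \<Rightarrow> 'm) \<Rightarrow> bool" where
  "multiplication_module scale \<longleftrightarrow> (\<forall>N. module.subspace scale N \<longrightarrow>
     (\<exists>I. ideal I \<and> N = module.span scale {scale r m | r m. r \<in> I}))"

definition module_iso_sets ::
  "('a::comm_ring_1 \<Rightarrow> 'm::ab_group_add \<Rightarrow> 'm) \<Rightarrow> 'm set \<Rightarrow>
   ('a \<Rightarrow> 'n::ab_group_add \<Rightarrow> 'n) \<Rightarrow> 'n set \<Rightarrow> bool" where
  "module_iso_sets scale1 A scale2 B \<longleftrightarrow> (\<exists>f. bij_betw f A B \<and>
     (\<forall>x\<in>A. \<forall>y\<in>A. f (x + y) = f x + f y) \<and>
     (\<forall>r. \<forall>x\<in>A. f (scale1 r x) = scale2 r (f x)))"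

end

theory Submission
  imports Defs
begin

text \<open>Since \<open>1 = e\<^sub>1 + \<dots> + e\<^sub>n\<close>, an element of \<open>R\<close> or \<open>M\<close> vanishes, or lies in a submodule, as soon
  as its components do, so everything reduces to a single component \<open>e M\<close> over \<open>D = e R\<close>.

  If \<open>M\<close> is faithful and multiplication and \<open>D\<close> is a Dedekind domain, then \<open>e M\<close> is torsion-free
  and \<open>a e M \<subseteq> D m\<close> for suitable \<open>a, m \<noteq> 0\<close>, so \<open>z \<mapsto> a z / m\<close> embeds \<open>e M\<close> into \<open>D\<close> as an
  ideal. If \<open>D\<close> is an Artinian local principal ideal ring with maximal ideal \<open>(p)\<close>, then \<open>p\<close> is
  nilpotent, so \<open>p e M \<noteq> e M\<close>, and any \<open>m \<notin> p e M\<close> is a free generator of \<open>e M\<close>.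

  Conversely, a module isomorphic to an ideal \<open>X\<close> of \<open>D\<close> is a multiplication module as soon as
  \<open>J = (J : X) X\<close> for all ideals \<open>J \<subseteq> X\<close>. This holds for \<open>X = D\<close>, and for invertible \<open>X\<close>; in a
  Dedekind domain every nonzero ideal is invertible by the classical argument: a maximal
  counterexample is enlarged by \<open>P\<^sup>-\<^sup>1\<close> for a maximal ideal \<open>P\<close>, which strictly exceeds \<open>D\<close>
  because nonzero ideals contain products of maximal ideals, and the enlargement is proper
  because \<open>D\<close> is integrally closed.\<close>

section \<open>Ideals of a direct factor\<close>

inductive_set ideal_prod :: "'a::comm_ring_1 set \<Rightarrow> 'a set \<Rightarrow> 'a set" for I J where
  ideal_prod_zero: "0 \<in> ideal_prod I J"
| ideal_prod_step: "u \<in> I \<Longrightarrow> v \<in> J \<Longrightarrow> x \<in> ideal_prod I J \<Longrightarrow> u * v + x \<in> ideal_prod I J"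

lemma ideal_prod_add: "x \<in> ideal_prod I J \<Longrightarrow> y \<in> ideal_prod I J \<Longrightarrow> x + y \<in> ideal_prod I J"
proof (induction x rule: ideal_prod.induct)
  case (ideal_prod_step u v x)
  then have "u * v + (x + y) \<in> ideal_prod I J" by (intro ideal_prod.ideal_prod_step)
  then show ?case by (simp add: add.assoc)
qed simp

lemma ideal_prod_mem: "u \<in> I \<Longrightarrow> v \<in> J \<Longrightarrow> u * v \<in> ideal_prod I J"
  using ideal_prod_step[OF _ _ ideal_prod_zero] by fastforce

lemma ideal_prod_mult_mem:
  "x \<in> ideal_prod I Q \<Longrightarrow> v \<in> J \<Longrightarrow> x * v \<in> ideal_prod I (ideal_prod Q J)"
proof (induction x rule: ideal_prod.induct)
  case (ideal_prod_step u q x)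
  have "(u * q + x) * v = u * (q * v) + x * v" by (simp add: algebra_simps)
  then show ?case
    using ideal_prod.ideal_prod_step[OF ideal_prod_step(1) ideal_prod_mem] ideal_prod_step by simp
qed (simp add: ideal_prod_zero)

lemma list_all2_choice: "\<forall>y\<in>set ys. \<exists>x. R x y \<Longrightarrow> \<exists>xs. list_all2 R xs ys"
proof (induction ys)
  case (Cons y ys)
  then obtain xs x where "list_all2 R xs ys" "R x y" by auto
  then have "list_all2 R (x # xs) (y # ys)" by simp
  then show ?case by blast
qed simp

locale direct_factor =
  fixes e :: "'a::comm_ring_1"
  assumes idem: "e * e = e"
begin

abbreviation D :: "'a set" where "D \<equiv> factor_ring e"

lemma mem_D_iff: "x \<in> D \<longleftrightarrow> e * x = x"
proof
  assume "x \<in> D"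
  then obtain r where "x = e * r" by (auto simp: factor_ring_def)
  then show "e * x = x" by (simp add: mult.assoc[symmetric] idem)
next
  assume "e * x = x"
  then show "x \<in> D" unfolding factor_ring_def by (metis (mono_tags) mem_Collect_eq)
qed

lemma e_mult_D: "x \<in> D \<Longrightarrow> e * x = x"
  and D_mult_e: "x \<in> D \<Longrightarrow> x * e = x"
  by (simp_all add: mem_D_iff mult.commute)

lemma D_zero [simp]: "0 \<in> D"
  and D_unit [simp]: "e \<in> D"
  and D_add [intro]: "x \<in> D \<Longrightarrow> y \<in> D \<Longrightarrow> x + y \<in> D"
  and D_minus [intro]: "x \<in> D \<Longrightarrow> - x \<in> D"
  and D_diff [intro]: "x \<in> D \<Longrightarrow> y \<in> D \<Longrightarrow> x - y \<in> D"
  and D_mult_left [intro]: "x \<in> D \<Longrightarrow> x * y \<in> D"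
  by (simp_all add: mem_D_iff idem distrib_left right_diff_distrib flip: mult.assoc)

lemma D_mult_right [intro]: "y \<in> D \<Longrightarrow> x * y \<in> D"
  by (metis D_mult_left mult.commute)

lemma D_power [intro]: "x \<in> D \<Longrightarrow> n > 0 \<Longrightarrow> x ^ n \<in> D"
  by (cases n) auto

lemma D_sum [intro]: "(\<And>i. i \<in> A \<Longrightarrow> f i \<in> D) \<Longrightarrow> sum f A \<in> D"
  by (induction A rule: infinite_finite_induct) auto

lemma ideal_inI:
  assumes "I \<subseteq> D" "0 \<in> I" "\<And>x y. x \<in> I \<Longrightarrow> y \<in> I \<Longrightarrow> x + y \<in> I"
    "\<And>x r. x \<in> I \<Longrightarrow> r * x \<in> I"
  shows "ideal_in D I"
  using assms by (auto simp: ideal_in_def)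

context
  fixes I assumes I: "ideal_in D I"
begin

lemma ideal_subset: "I \<subseteq> D"
  and ideal_zero: "0 \<in> I"
  and ideal_add: "x \<in> I \<Longrightarrow> y \<in> I \<Longrightarrow> x + y \<in> I"
  using I by (auto simp: ideal_in_def)

text \<open>Ideals of \<open>D\<close> absorb multiplication by all of \<open>R\<close>, not only by \<open>D\<close>, since \<open>r x = (e r) x\<close>.\<close>

lemma ideal_mult_left: "x \<in> I \<Longrightarrow> r * x \<in> I"
proof -
  assume x: "x \<in> I"
  then have "(e * r) * x \<in> I" using I D_mult_left[OF D_unit, of r] by (auto simp: ideal_in_def)
  moreover have "e * x = x" using x ideal_subset e_mult_D by blast
  then have "(e * r) * x = r * x" by (metis mult.left_commute mult.commute)
  ultimately show ?thesis by simp
qed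

lemma ideal_mult_right: "x \<in> I \<Longrightarrow> x * r \<in> I"
  using ideal_mult_left by (metis mult.commute)

lemma ideal_sum: "(\<And>i. i \<in> A \<Longrightarrow> f i \<in> I) \<Longrightarrow> sum f A \<in> I"
  by (induction A rule: infinite_finite_induct) (auto intro: ideal_zero ideal_add)

lemma ideal_eq_D_if_unit: "e \<in> I \<Longrightarrow> I = D"
  using ideal_subset ideal_mult_left[of e] D_mult_e by (metis subsetI subset_antisym)

end

lemma ideal_D: "ideal_in D D"
  by (rule ideal_inI) auto

lemma ideal_Union_chain:
  assumes C: "C \<noteq> {}" "subset.chain S C" and S: "\<And>I. I \<in> S \<Longrightarrow> ideal_in D I"
  shows "ideal_in D (\<Union>C)"
proof -
  have Ci: "\<And>A. A \<in> C \<Longrightarrow> ideal_in D A" using C(2) S by (auto simp: subset.chain_def)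
  show ?thesis
  proof (rule ideal_inI)
    show "\<Union>C \<subseteq> D" using Ci ideal_subset by (meson Union_least)
    obtain A0 where "A0 \<in> C" using C(1) by blast
    then show "0 \<in> \<Union>C" using Ci ideal_zero by blast
    show "x + y \<in> \<Union>C" if xy: "x \<in> \<Union>C" "y \<in> \<Union>C" for x y
    proof -
      obtain A B where AB: "A \<in> C" "B \<in> C" "x \<in> A" "y \<in> B" using xy by auto
      from C(2) AB(1,2) have "A \<subseteq> B \<or> B \<subseteq> A" by (auto simp: subset.chain_def)
      then show ?thesis
      proof
        assume "A \<subseteq> B"
        then show ?thesis using AB ideal_add[OF Ci[OF AB(2)], of x y] by blast
      next
        assume "B \<subseteq> A"
        then show ?thesis using AB ideal_add[OF Ci[OF AB(1)], of x y] by blast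
      qed
    qed
    show "r * x \<in> \<Union>C" if x: "x \<in> \<Union>C" for x r
    proof -
      obtain A where "A \<in> C" "x \<in> A" using x by blast
      then show ?thesis using ideal_mult_left[OF Ci[OF \<open>A \<in> C\<close>], of x r] by blast
    qed
  qed
qed

lemma noetherian_maximal_element:
  assumes N: "noetherian_at e" and "A \<in> S" and S: "\<And>I. I \<in> S \<Longrightarrow> ideal_in D I"
  obtains M where "M \<in> S" "\<And>X. X \<in> S \<Longrightarrow> M \<subseteq> X \<Longrightarrow> X = M"
proof -
  have "\<exists>M\<in>S. \<forall>X\<in>S. M \<subseteq> X \<longrightarrow> X = M"
  proof (rule subset_Zorn_nonempty)
    show "S \<noteq> {}" using \<open>A \<in> S\<close> by blast
  next
    fix C assume C: "C \<noteq> {}" "subset.chain S C"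
    then have CS: "C \<subseteq> S" by (auto simp: subset.chain_def)
    obtain F where F: "finite F" "F \<subseteq> \<Union>C" "\<Union>C = ideal_gen_in D F"
      using N[unfolded noetherian_at_def, rule_format, OF ideal_Union_chain[OF C S]] by blast
    obtain B where B: "B \<in> C" "F \<subseteq> B"
      using finite_subset_Union_chain[OF F(1,2) C] by blast
    have Bi: "ideal_in D B" using B(1) CS S by blast
    have "ideal_gen_in D F \<subseteq> B"
    proof
      fix x assume "x \<in> ideal_gen_in D F"
      then obtain c where "x = (\<Sum>f\<in>F. c f * f)" by (auto simp: ideal_gen_in_def)
      moreover have "(\<Sum>f\<in>F. c f * f) \<in> B"
        by (rule ideal_sum[OF Bi]) (use ideal_mult_left[OF Bi] B(2) in blast)
      ultimately show "x \<in> B" by simp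
    qed
    then have "\<Union>C = B" using F(3) B(1) by blast
    then show "\<Union>C \<in> S" using B(1) CS by auto
  qed
  then show thesis using that by blast
qed

lemma maximal_ideal_exists:
  assumes N: "noetherian_at e" and I: "ideal_in D I" "I \<noteq> D"
  obtains P where "maximal_ideal_in D P" "I \<subseteq> P"
proof -
  let ?S = "{J. ideal_in D J \<and> I \<subseteq> J \<and> J \<noteq> D}"
  have "I \<in> ?S" using I by blast
  then obtain P where P: "P \<in> ?S" "\<And>X. X \<in> ?S \<Longrightarrow> P \<subseteq> X \<Longrightarrow> X = P"
    by (rule noetherian_maximal_element[OF N]) auto
  have "maximal_ideal_in D P" unfolding maximal_ideal_in_def using P by blast
  with P(1) show thesis using that by blast
qed

definition principal_ideal :: "'a \<Rightarrow> 'a set" where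
  "principal_ideal a = {a * d | d. d \<in> D}"

lemma principal_ideal_mult: "a \<in> D \<Longrightarrow> a * r \<in> principal_ideal a"
proof -
  assume a: "a \<in> D"
  then have "a * r = a * (e * r)" using D_mult_e by (metis mult.assoc)
  then show ?thesis unfolding principal_ideal_def using D_mult_left[OF D_unit] by blast
qed

lemma principal_ideal_self: "a \<in> D \<Longrightarrow> a \<in> principal_ideal a"
  using principal_ideal_mult[of a e] D_mult_e by simp

lemma principal_idealE: "x \<in> principal_ideal a \<Longrightarrow> (\<And>d. d \<in> D \<Longrightarrow> x = a * d \<Longrightarrow> P) \<Longrightarrow> P"
  unfolding principal_ideal_def by blast

lemma ideal_principal_ideal: assumes a: "a \<in> D" shows "ideal_in D (principal_ideal a)"
proof (rule ideal_inI)
  show "principal_ideal a \<subseteq> D" unfolding principal_ideal_def using a by auto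
  show "0 \<in> principal_ideal a" using principal_ideal_mult[OF a, of 0] by simp
  show "x + y \<in> principal_ideal a" if "x \<in> principal_ideal a" "y \<in> principal_ideal a" for x y
    using that principal_ideal_mult[OF a] by (auto elim!: principal_idealE simp flip: distrib_left)
  show "r * x \<in> principal_ideal a" if "x \<in> principal_ideal a" for x r
    using that principal_ideal_mult[OF a] by (auto elim!: principal_idealE simp: mult.left_commute)
qed

definition adjoin :: "'a set \<Rightarrow> 'a \<Rightarrow> 'a set" where
  "adjoin P x = {p + x * d | p d. p \<in> P \<and> d \<in> D}"

context
  fixes P x assumes P: "ideal_in D P" and x: "x \<in> D"
begin

lemma ideal_adjoin: "ideal_in D (adjoin P x)"
proof (rule ideal_inI)
  show "adjoin P x \<subseteq> D" using ideal_subset[OF P] x by (auto simp: adjoin_def)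
  have "(0::'a) = 0 + x * 0" by simp
  then show "0 \<in> adjoin P x" using ideal_zero[OF P] D_zero unfolding adjoin_def by blast
  show "a + b \<in> adjoin P x" if ab: "a \<in> adjoin P x" "b \<in> adjoin P x" for a b
  proof -
    obtain p d p' d' where "a = p + x * d" "b = p' + x * d'" "p \<in> P" "d \<in> D" "p' \<in> P" "d' \<in> D"
      using ab unfolding adjoin_def by blast
    then have "a + b = (p + p') + x * (d + d')" "p + p' \<in> P" "d + d' \<in> D"
      using ideal_add[OF P] by (auto simp: algebra_simps)
    then show ?thesis unfolding adjoin_def by blast
  qed
  show "r * a \<in> adjoin P x" if a: "a \<in> adjoin P x" for a r
  proof -
    obtain p d where "a = p + x * d" "p \<in> P" "d \<in> D" using a unfolding adjoin_def by blast
    then have "r * a = r * p + x * (r * d)" "r * p \<in> P" "r * d \<in> D"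
      using ideal_mult_left[OF P] by (auto simp: algebra_simps)
    then show ?thesis unfolding adjoin_def by blast
  qed
qed

lemma subset_adjoin: "P \<subseteq> adjoin P x"
proof
  fix p assume "p \<in> P"
  moreover have "p = p + x * 0" by simp
  ultimately show "p \<in> adjoin P x" unfolding adjoin_def using D_zero by blast
qed

lemma mem_adjoin: "x \<in> adjoin P x"
proof -
  have "x = 0 + x * e" using D_mult_e[OF x] by simp
  then show ?thesis unfolding adjoin_def using ideal_zero[OF P] D_unit by blast
qed

end

lemma
  assumes "maximal_ideal_in D P"
  shows maximal_ideal_ideal: "ideal_in D P" and maximal_ideal_proper: "P \<noteq> D"
    and maximal_ideal_maximal: "\<And>J. ideal_in D J \<Longrightarrow> P \<subseteq> J \<Longrightarrow> J = P \<or> J = D"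
  using assms unfolding maximal_ideal_in_def by auto

lemma maximal_ideal_prime:
  assumes P: "maximal_ideal_in D P" and xy: "x \<in> D" "y \<in> D" "x * y \<in> P"
  shows "x \<in> P \<or> y \<in> P"
proof (rule ccontr)
  assume nxy: "\<not> (x \<in> P \<or> y \<in> P)"
  note Pi = maximal_ideal_ideal[OF P] and P_max = maximal_ideal_maximal[OF P]
  have "adjoin P x \<noteq> P" using mem_adjoin[OF Pi xy(1)] nxy by blast
  then have "adjoin P x = D" using P_max[OF ideal_adjoin[OF Pi xy(1)] subset_adjoin[OF Pi xy(1)]]
    by blast
  then obtain p d where pd: "e = p + x * d" "p \<in> P" "d \<in> D"
    using D_unit unfolding adjoin_def by blast
  have "y = y * e" using D_mult_e[OF xy(2)] by simp
  also have "\<dots> = y * p + (x * y) * d" using pd(1) by (simp add: algebra_simps)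
  also have "\<dots> \<in> P"
    by (rule ideal_add[OF Pi ideal_mult_left[OF Pi pd(2)] ideal_mult_right[OF Pi xy(3)]])
  finally have "y \<in> P" .
  with nxy show False by blast
qed

lemma D_no_zero_divisors:
  "is_domain_at e \<Longrightarrow> x \<in> D \<Longrightarrow> y \<in> D \<Longrightarrow> x * y = 0 \<Longrightarrow> x = 0 \<or> y = 0"
  unfolding is_domain_at_def by blast

lemma D_mult_cancel:
  assumes "is_domain_at e" "a \<in> D" "a \<noteq> 0" "y \<in> D" "z \<in> D" "a * y = a * z"
  shows "y = z"
proof -
  have "a * (y - z) = 0" using assms(6) by (simp add: right_diff_distrib)
  then show ?thesis using D_no_zero_divisors[OF assms(1,2), of "y - z"] assms by auto
qed

lemma ideal_prod_subset: "x \<in> ideal_prod I J \<Longrightarrow> I \<subseteq> D \<Longrightarrow> x \<in> D"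
  by (induction x rule: ideal_prod.induct) auto

lemma ideal_prod_mult_left: "x \<in> ideal_prod I J \<Longrightarrow> ideal_in D I \<Longrightarrow> r * x \<in> ideal_prod I J"
proof (induction x rule: ideal_prod.induct)
  case (ideal_prod_step u v x)
  have "r * (u * v + x) = (r * u) * v + r * x" by (simp add: algebra_simps)
  then show ?case
    using ideal_prod.ideal_prod_step[OF ideal_mult_left[of I u r]] ideal_prod_step by simp
qed (simp add: ideal_prod_zero)

lemma ideal_ideal_prod: "ideal_in D I \<Longrightarrow> ideal_in D (ideal_prod I J)"
  by (rule ideal_inI)
    (auto intro: ideal_prod_subset[OF _ ideal_subset] ideal_prod_zero ideal_prod_add ideal_prod_mult_left)

section \<open>Invertible ideals of Dedekind domains\<close>

text \<open>\<open>products_in Ps A\<close> says that the ideal product of the list \<open>Ps\<close> lies in \<open>A\<close>, checked on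
  products of elements; the factor \<open>e\<close> makes the empty product the unit of \<open>D\<close>.\<close>

definition products_in :: "'a set list \<Rightarrow> 'a set \<Rightarrow> bool" where
  "products_in Ps A \<longleftrightarrow> (\<forall>xs. list_all2 (\<in>) xs Ps \<longrightarrow> e * prod_list xs \<in> A)"

lemma e_prod_list_append: "e * prod_list (us @ vs) = (e * prod_list us) * (e * prod_list vs)"
proof -
  have "e * prod_list (us @ vs) = (e * e) * (prod_list us * prod_list vs)" by (simp add: idem)
  then show ?thesis by (simp add: algebra_simps)
qed

lemma e_prod_list_in_D: "e * prod_list xs \<in> D"
  by (rule D_mult_left[OF D_unit])

lemma products_in_append_adjoin:
  assumes A: "ideal_in D A" and xy: "x \<in> D" "y \<in> D" "x * y \<in> A"
    and Ps: "products_in Ps (adjoin A x)" and Qs: "products_in Qs (adjoin A y)"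
  shows "products_in (Ps @ Qs) A"
  unfolding products_in_def
proof (intro allI impI)
  fix xs assume "list_all2 (\<in>) xs (Ps @ Qs)"
  then obtain us vs where uv: "xs = us @ vs" "list_all2 (\<in>) us Ps" "list_all2 (\<in>) vs Qs"
    by (auto simp: list_all2_append2)
  obtain p1 d1 where 1: "e * prod_list us = p1 + x * d1" "p1 \<in> A"
    using Ps uv(2) unfolding products_in_def adjoin_def by blast
  obtain p2 d2 where 2: "e * prod_list vs = p2 + y * d2" "p2 \<in> A"
    using Qs uv(3) unfolding products_in_def adjoin_def by blast
  have "e * prod_list xs = p1 * (p2 + y * d2) + p2 * (x * d1) + (x * y) * (d1 * d2)"
    unfolding uv(1) e_prod_list_append 1(1) 2(1) by (simp add: algebra_simps)
  then show "e * prod_list xs \<in> A"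
    using ideal_add[OF A] ideal_mult_right[OF A] 1(2) 2(2) xy(3) by simp
qed

lemma products_in_singleton: "ideal_in D M \<Longrightarrow> products_in [M] M"
  unfolding products_in_def by (auto simp: list_all2_Cons2 intro: ideal_mult_left)

lemma dedekind_ideal_contains_maximal_product:
  assumes DK: "dedekind_at e" and A: "ideal_in D A" "A \<noteq> {0}"
  obtains Ps where "\<forall>Q\<in>set Ps. maximal_ideal_in D Q" "products_in Ps A"
proof -
  have N: "noetherian_at e" using DK by (simp add: dedekind_at_def)
  define good where "good A \<longleftrightarrow> (\<exists>Ps. (\<forall>Q\<in>set Ps. maximal_ideal_in D Q) \<and> products_in Ps A)"
    for A
  have "good A"
  proof (rule ccontr)
    assume "\<not> good A"
    let ?S = "{A. ideal_in D A \<and> A \<noteq> {0} \<and> \<not> good A}"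
    have "A \<in> ?S" using A \<open>\<not> good A\<close> by blast
    then obtain M where M: "M \<in> ?S" and M_max: "\<And>X. X \<in> ?S \<Longrightarrow> M \<subseteq> X \<Longrightarrow> X = M"
      by (rule noetherian_maximal_element[OF N]) auto
    have Mi: "ideal_in D M" and M0: "M \<noteq> {0}" and M_bad: "\<not> good M" using M by auto
    have "M \<noteq> D"
    proof
      assume "M = D"
      then have "products_in [] M" unfolding products_in_def by simp
      then have "good M" unfolding good_def by (intro exI[of _ "[]"]) simp
      with M_bad show False by blast
    qed
    have "\<not> maximal_ideal_in D M"
    proof
      assume "maximal_ideal_in D M"
      then have "good M" unfolding good_def using products_in_singleton[OF Mi]
        by (intro exI[of _ "[M]"]) simp
      with M_bad show False by blast
    qed
    then have "\<not> prime_ideal_in D M" using DK M0 by (auto simp: dedekind_at_def)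
    then obtain x y where xy: "x \<in> D" "y \<in> D" "x * y \<in> M" "x \<notin> M" "y \<notin> M"
      using Mi \<open>M \<noteq> D\<close> unfolding prime_ideal_in_def by blast
    have adjoin_good: "good (adjoin M z)" if z: "z \<in> D" "z \<notin> M" for z
    proof (rule ccontr)
      assume "\<not> good (adjoin M z)"
      moreover have "adjoin M z \<noteq> {0}" using subset_adjoin[OF Mi z(1)] M0 ideal_zero[OF Mi] by blast
      ultimately have "adjoin M z \<in> ?S" using ideal_adjoin[OF Mi z(1)] by blast
      then have "adjoin M z = M" using M_max subset_adjoin[OF Mi z(1)] by blast
      with mem_adjoin[OF Mi z(1)] z(2) show False by blast
    qed
    obtain Ps where "\<forall>Q\<in>set Ps. maximal_ideal_in D Q" "products_in Ps (adjoin M x)"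
      using adjoin_good[OF xy(1,4)] unfolding good_def by blast
    moreover obtain Qs where "\<forall>Q\<in>set Qs. maximal_ideal_in D Q" "products_in Qs (adjoin M y)"
      using adjoin_good[OF xy(2,5)] unfolding good_def by blast
    ultimately have "good M"
      using products_in_append_adjoin[OF Mi xy(1-3)] unfolding good_def by (metis Un_iff set_append)
    with M_bad show False by blast
  qed
  with that show thesis unfolding good_def by blast
qed

lemma e_prod_list_notin_maximal:
  assumes P: "maximal_ideal_in D P"
  shows "list_all2 (\<lambda>x Q. x \<in> D \<and> x \<notin> P) xs Ps \<Longrightarrow> e * prod_list xs \<notin> P"
proof (induction xs Ps rule: list_all2_induct)
  case Nil
  then show ?case
    using ideal_eq_D_if_unit[OF maximal_ideal_ideal[OF P]] maximal_ideal_proper[OF P] by auto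
next
  case (Cons x xs Q Qs)
  show ?case
  proof
    assume "e * prod_list (x # xs) \<in> P"
    then have "x * (e * prod_list xs) \<in> P" by (simp add: algebra_simps)
    then show False using maximal_ideal_prime[OF P _ e_prod_list_in_D, of x xs] Cons by blast
  qed
qed

lemma maximal_ideal_mem_if_products_in:
  assumes P: "maximal_ideal_in D P" and Ps_max: "\<forall>Q\<in>set Ps. maximal_ideal_in D Q"
    and Ps_in: "products_in Ps A" and A: "A \<subseteq> P"
  shows "P \<in> set Ps"
proof -
  have "\<exists>Q\<in>set Ps. Q \<subseteq> P"
  proof (rule ccontr)
    assume "\<not> ?thesis"
    then have "\<forall>Q\<in>set Ps. \<exists>x. x \<in> Q \<and> x \<notin> P" by (meson subsetI)
    then obtain xs where xs: "list_all2 (\<lambda>x Q. x \<in> Q \<and> x \<notin> P) xs Ps"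
      using list_all2_choice[of Ps "\<lambda>x Q. x \<in> Q \<and> x \<notin> P"] by blast
    have "xs ! i \<in> D" if i: "i < length xs" for i
    proof -
      have "xs ! i \<in> Ps ! i" "i < length Ps" using xs i by (auto simp: list_all2_conv_all_nth)
      moreover have "Ps ! i \<subseteq> D"
        using Ps_max nth_mem[OF \<open>i < length Ps\<close>] ideal_subset[OF maximal_ideal_ideal] by blast
      ultimately show ?thesis by blast
    qed
    with xs have "list_all2 (\<lambda>x Q. x \<in> D \<and> x \<notin> P) xs Ps"
      by (simp add: list_all2_conv_all_nth)
    then have "e * prod_list xs \<notin> P" by (rule e_prod_list_notin_maximal[OF P])
    moreover have "list_all2 (\<in>) xs Ps" using xs by (rule list_all2_mono) simp
    then have "e * prod_list xs \<in> A" using Ps_in unfolding products_in_def by blast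
    ultimately show False using A by blast
  qed
  then obtain Q where Q: "Q \<in> set Ps" "Q \<subseteq> P" by blast
  have "maximal_ideal_in D Q" using Ps_max Q(1) by blast
  then have "Q = P"
    using maximal_ideal_maximal[OF _ maximal_ideal_ideal[OF P] Q(2)] maximal_ideal_proper[OF P]
    by blast
  with Q(1) show ?thesis by simp
qed

text \<open>The key step towards inverting a maximal ideal \<open>P\<close>: an element of \<open>P\<^sup>-\<^sup>1\<close> outside \<open>D\<close>,
  written as \<open>b/a\<close>. It is found from a product of maximal ideals inside \<open>(a)\<close> of minimal
  length: one factor is \<open>P\<close>, and \<open>b\<close> is taken from the product of the others.\<close>

lemma maximal_ideal_inverse_nontrivial:
  assumes DK: "dedekind_at e" and P: "maximal_ideal_in D P" and a: "a \<in> P" "a \<noteq> 0"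
  obtains b where "b \<in> D" "b \<notin> principal_ideal a" "\<And>p. p \<in> P \<Longrightarrow> b * p \<in> principal_ideal a"
proof -
  note Pi = maximal_ideal_ideal[OF P]
  have aD: "a \<in> D" using a(1) ideal_subset[OF Pi] by blast
  have "principal_ideal a \<noteq> {0}" using principal_ideal_self[OF aD] a(2) by blast
  define good where
    "good Ps \<longleftrightarrow> (\<forall>Q\<in>set Ps. maximal_ideal_in D Q) \<and> products_in Ps (principal_ideal a)" for Ps
  obtain Ps0 where "\<forall>Q\<in>set Ps0. maximal_ideal_in D Q" "products_in Ps0 (principal_ideal a)"
    by (rule dedekind_ideal_contains_maximal_product[OF DK ideal_principal_ideal[OF aD]
        \<open>principal_ideal a \<noteq> {0}\<close>])
  then have "good Ps0" unfolding good_def by blast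
  then obtain Ps where Ps: "good Ps" and Ps_min: "\<And>Qs. good Qs \<Longrightarrow> length Ps \<le> length Qs"
    using ex_has_least_nat[of good Ps0 length] by blast
  have Ps_max: "\<forall>Q\<in>set Ps. maximal_ideal_in D Q" and Ps_in: "products_in Ps (principal_ideal a)"
    using Ps unfolding good_def by auto
  have "principal_ideal a \<subseteq> P"
    unfolding principal_ideal_def using ideal_mult_right[OF Pi a(1)] by blast
  then have "P \<in> set Ps" by (rule maximal_ideal_mem_if_products_in[OF P Ps_max Ps_in])
  then obtain ys zs where yz: "Ps = ys @ P # zs" by (meson in_set_conv_decomp)
  have "\<not> good (ys @ zs)" using Ps_min[of "ys @ zs"] yz by auto
  moreover have "\<forall>Q\<in>set (ys @ zs). maximal_ideal_in D Q" using Ps_max yz by auto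
  ultimately have "\<not> products_in (ys @ zs) (principal_ideal a)" unfolding good_def by blast
  then obtain xs where xs: "list_all2 (\<in>) xs (ys @ zs)" "e * prod_list xs \<notin> principal_ideal a"
    unfolding products_in_def by blast
  then obtain us vs where uv: "xs = us @ vs" "list_all2 (\<in>) us ys" "list_all2 (\<in>) vs zs"
    by (auto simp: list_all2_append2)
  show thesis
  proof (rule that[OF e_prod_list_in_D xs(2)])
    fix p assume "p \<in> P"
    then have "list_all2 (\<in>) (us @ p # vs) Ps" unfolding yz using uv
      by (intro list_all2_appendI) auto
    then have "e * prod_list (us @ p # vs) \<in> principal_ideal a"
      using Ps_in unfolding products_in_def by blast
    moreover have "e * prod_list (us @ p # vs) = e * prod_list xs * p"
      unfolding uv(1) by (simp add: algebra_simps)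
    ultimately show "e * prod_list xs * p \<in> principal_ideal a" by simp
  qed
qed

definition prefix_ideal :: "(nat \<Rightarrow> 'a) \<Rightarrow> nat \<Rightarrow> 'a set" where
  "prefix_ideal p k = {x. \<exists>d. (\<forall>j. d j \<in> D) \<and> x = (\<Sum>j\<le>k. d j * p j)}"

lemma ideal_prefix_ideal:
  assumes p: "\<And>j. p j \<in> D" shows "ideal_in D (prefix_ideal p k)"
proof (rule ideal_inI)
  show "prefix_ideal p k \<subseteq> D" unfolding prefix_ideal_def using p by (auto intro!: D_sum)
  show "0 \<in> prefix_ideal p k" unfolding prefix_ideal_def by (intro CollectI exI[of _ "\<lambda>j. 0"]) simp
  show "x + y \<in> prefix_ideal p k" if xy: "x \<in> prefix_ideal p k" "y \<in> prefix_ideal p k" for x y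
  proof -
    obtain d d' where d: "\<forall>j. d j \<in> D" "x = (\<Sum>j\<le>k. d j * p j)"
      "\<forall>j. d' j \<in> D" "y = (\<Sum>j\<le>k. d' j * p j)"
      using xy unfolding prefix_ideal_def by blast
    then have "x + y = (\<Sum>j\<le>k. (d j + d' j) * p j)" by (simp add: sum.distrib distrib_right)
    with d show ?thesis
      unfolding prefix_ideal_def by (intro CollectI exI[of _ "\<lambda>j. d j + d' j"]) auto
  qed
  show "r * x \<in> prefix_ideal p k" if x: "x \<in> prefix_ideal p k" for x r
  proof -
    obtain d where d: "\<forall>j. d j \<in> D" "x = (\<Sum>j\<le>k. d j * p j)"
      using x unfolding prefix_ideal_def by blast
    then have "r * x = (\<Sum>j\<le>k. (r * d j) * p j)" by (simp add: sum_distrib_left mult.assoc)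
    with d show ?thesis unfolding prefix_ideal_def by (intro CollectI exI[of _ "\<lambda>j. r * d j"]) auto
  qed
qed

lemma prefix_ideal_Suc: "prefix_ideal p k \<subseteq> prefix_ideal p (Suc k)"
proof
  fix x assume "x \<in> prefix_ideal p k"
  then obtain d where d: "\<forall>j. d j \<in> D" "x = (\<Sum>j\<le>k. d j * p j)" unfolding prefix_ideal_def by blast
  define d' where "d' j = (if j \<le> k then d j else 0)" for j
  have "x = (\<Sum>j\<le>Suc k. d' j * p j)" using d by (simp add: d'_def)
  moreover have "\<forall>j. d' j \<in> D" using d by (simp add: d'_def)
  ultimately show "x \<in> prefix_ideal p (Suc k)" unfolding prefix_ideal_def by blast
qed

lemma mem_prefix_ideal: "p k \<in> D \<Longrightarrow> p k \<in> prefix_ideal p k"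
proof -
  assume "p k \<in> D"
  define d where "d j = (if j = k then e else 0)" for j
  have "(\<Sum>j\<le>k. d j * p j) = (\<Sum>j\<le>k. if k = j then e * p j else 0)"
    by (rule sum.cong) (simp_all add: d_def)
  then have "p k = (\<Sum>j\<le>k. d j * p j)" using e_mult_D[OF \<open>p k \<in> D\<close>] by simp
  moreover have "\<forall>j. d j \<in> D" by (simp add: d_def)
  ultimately show ?thesis unfolding prefix_ideal_def by blast
qed

lemma noetherian_sequence_dependent:
  assumes N: "noetherian_at e" and p: "\<And>j. p j \<in> D"
  obtains d N where "\<And>j. d j \<in> D" "p (Suc N) = (\<Sum>j\<le>N. d j * p j)"
proof -
  have "prefix_ideal p 0 \<in> range (prefix_ideal p)" by simp
  then obtain LN where LN: "LN \<in> range (prefix_ideal p)"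
    "\<And>X. X \<in> range (prefix_ideal p) \<Longrightarrow> LN \<subseteq> X \<Longrightarrow> X = LN"
    by (rule noetherian_maximal_element[OF N]) (use ideal_prefix_ideal[OF p] in auto)
  then obtain N where LN_eq: "LN = prefix_ideal p N" by blast
  have "prefix_ideal p (Suc N) = prefix_ideal p N"
    using LN(2)[of "prefix_ideal p (Suc N)"] prefix_ideal_Suc[of p N] LN_eq by simp
  then have "p (Suc N) \<in> prefix_ideal p N" using mem_prefix_ideal[of p "Suc N"] p by simp
  with that show thesis unfolding prefix_ideal_def by blast
qed

lemma integrally_closed_divides:
  assumes ic: "integrally_closed_at e" and ab: "a \<in> D" "a \<noteq> 0" "b \<in> D" and "n > 0"
    and d: "\<And>j. d j \<in> D" and rel: "b ^ n = (\<Sum>j<n. d j * a ^ (n - j) * b ^ j)"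
  shows "b \<in> principal_ideal a"
proof -
  define c where "c j = - d (n - j)" for j
  have "(\<Sum>j\<in>{1..n}. d (n - j) * b ^ (n - j) * a ^ j) = (\<Sum>j<n. d j * a ^ (n - j) * b ^ j)"
  proof (rule sum.reindex_bij_witness[of _ "\<lambda>i. n - i" "\<lambda>j. n - j"])
    show "\<And>i. i \<in> {1..n} \<Longrightarrow> n - (n - i) = i" "\<And>i. i \<in> {1..n} \<Longrightarrow> n - i \<in> {..<n}"
      "\<And>i. i \<in> {..<n} \<Longrightarrow> n - (n - i) = i" "\<And>i. i \<in> {..<n} \<Longrightarrow> n - i \<in> {1..n}"
      by auto
    show "d (n - i) * a ^ (n - (n - i)) * b ^ (n - i) = d (n - i) * b ^ (n - i) * a ^ i"
      if "i \<in> {1..n}" for i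
      using that by (simp add: algebra_simps)
  qed
  then have monic: "b ^ n + (\<Sum>j\<in>{1..n}. c j * b ^ (n - j) * a ^ j) = 0"
    unfolding c_def using rel by (simp add: sum_negf)
  have "\<forall>j. c j \<in> D" using d by (simp add: c_def D_minus)
  then have "\<exists>n>0. \<exists>c. (\<forall>j. c j \<in> D) \<and>
      b ^ n + (\<Sum>j\<in>{1..n}. c j * b ^ (n - j) * a ^ j) = 0"
    using \<open>n > 0\<close> monic by (intro exI[of _ n] conjI exI[of _ c])
  then obtain q where "q \<in> D" "b = q * a"
    using ic[unfolded integrally_closed_at_def, rule_format, OF ab(3,1,2)] by blast
  then show ?thesis unfolding principal_ideal_def by (auto simp: mult.commute)
qed

text \<open>If \<open>b I \<subseteq> a I\<close> for a nonzero ideal \<open>I\<close>, then \<open>b/a\<close> is integral over \<open>D\<close>: iterating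
  \<open>b p\<^sub>j = a p\<^sub>j\<^sub>+\<^sub>1\<close> from some \<open>p\<^sub>0 = c \<noteq> 0\<close> gives \<open>a\<^sup>j p\<^sub>j = b\<^sup>j c\<close>, and a linear dependence of
  \<open>p\<^sub>N\<^sub>+\<^sub>1\<close> on \<open>p\<^sub>0, \<dots>, p\<^sub>N\<close> becomes a monic equation for \<open>b/a\<close> after cancelling \<open>c\<close>.\<close>

lemma colon_stable_sequence:
  fixes a b c :: 'a
  assumes c: "c \<in> I" and stable: "\<And>x. x \<in> I \<Longrightarrow> \<exists>y\<in>I. b * x = a * y"
  shows "\<exists>p. (\<forall>j. p j \<in> I) \<and> (\<forall>j. a ^ j * p j = b ^ j * c)"
proof -
  define next_elem where "next_elem x = (SOME y. y \<in> I \<and> b * x = a * y)" for x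
  have next_elem: "next_elem x \<in> I \<and> b * x = a * next_elem x" if "x \<in> I" for x
    unfolding next_elem_def by (rule someI_ex) (use stable[OF that] in blast)
  define p where "p j = (next_elem ^^ j) c" for j
  have pI: "p j \<in> I" for j by (induction j) (auto simp: p_def c next_elem)
  have p_step: "b * p j = a * p (Suc j)" for j using next_elem[OF pI[of j]] by (simp add: p_def)
  have "a ^ j * p j = b ^ j * c" for j
  proof (induction j)
    case (Suc j)
    have "a ^ Suc j * p (Suc j) = a ^ j * (a * p (Suc j))" by (simp only: power_Suc2 mult.assoc)
    also have "\<dots> = a ^ j * (b * p j)" by (simp only: p_step)
    also have "\<dots> = b * (a ^ j * p j)" by (rule mult.left_commute)
    also have "\<dots> = b ^ Suc j * c" using Suc by simp
    finally show ?case .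
  qed (simp add: p_def)
  with pI show ?thesis by blast
qed

lemma colon_stable_mem_principal_ideal:
  assumes DK: "dedekind_at e" and I: "ideal_in D I" and c: "c \<in> I" "c \<noteq> 0"
    and a: "a \<in> D" "a \<noteq> 0" and b: "b \<in> D" and stable: "\<And>x. x \<in> I \<Longrightarrow> \<exists>y\<in>I. b * x = a * y"
  shows "b \<in> principal_ideal a"
proof -
  have N: "noetherian_at e" and dom: "is_domain_at e" and ic: "integrally_closed_at e"
    using DK by (auto simp: dedekind_at_def)
  obtain p where pI: "\<And>j. p j \<in> I" and p_power: "\<And>j. a ^ j * p j = b ^ j * c"
    using colon_stable_sequence[OF c(1) stable] by blast
  have pD: "p j \<in> D" for j using pI ideal_subset[OF I] by blast
  obtain N d where d: "\<And>j. d j \<in> D" and dep: "p (Suc N) = (\<Sum>j\<le>N. d j * p j)"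
    by (rule noetherian_sequence_dependent[OF N, of p, OF pD]) blast
  define n where "n = Suc N"
  have "b ^ n * c = a ^ n * p n" using p_power[of n] by simp
  also have "\<dots> = (\<Sum>j\<le>N. d j * (a ^ n * p j))"
    unfolding n_def dep sum_distrib_left by (simp add: algebra_simps)
  also have "\<dots> = (\<Sum>j\<le>N. d j * a ^ (n - j) * b ^ j * c)"
  proof (rule sum.cong[OF refl])
    fix j assume "j \<in> {..N}"
    then have "a ^ n = a ^ (n - j) * a ^ j" unfolding n_def by (simp flip: power_add)
    then show "d j * (a ^ n * p j) = d j * a ^ (n - j) * b ^ j * c"
      using p_power[of j] by (simp add: mult.assoc)
  qed
  finally have "c * (b ^ n - (\<Sum>j\<le>N. d j * a ^ (n - j) * b ^ j)) = 0"
    by (simp add: algebra_simps sum_distrib_left sum_distrib_right)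
  moreover have "b ^ n - (\<Sum>j\<le>N. d j * a ^ (n - j) * b ^ j) \<in> D"
    using b d unfolding n_def by (intro D_diff D_power D_sum) auto
  moreover have "c \<in> D" using c ideal_subset[OF I] by blast
  ultimately have "b ^ n = (\<Sum>j\<le>N. d j * a ^ (n - j) * b ^ j)"
    using D_no_zero_divisors[OF dom] c(2) by fastforce
  then show ?thesis
    by (intro integrally_closed_divides[OF ic a b, of n d]) (simp_all add: d n_def lessThan_Suc_atMost)
qed

definition colon :: "'a set \<Rightarrow> 'a set \<Rightarrow> 'a set" where
  "colon J X = {k \<in> D. \<forall>x\<in>X. k * x \<in> J}"

lemma ideal_colon: "ideal_in D J \<Longrightarrow> ideal_in D (colon J X)"
  by (rule ideal_inI)
    (auto simp: colon_def distrib_right mult.assoc intro: ideal_zero ideal_add ideal_mult_left)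

text \<open>An invertible ideal is one with \<open>I J = (a)\<close> for some ideal \<open>J\<close> and \<open>a \<noteq> 0\<close>;
  this avoids the field of fractions.\<close>

definition invertible :: "'a set \<Rightarrow> bool" where
  "invertible I \<longleftrightarrow> (\<exists>a\<in>D. a \<noteq> 0 \<and> (\<exists>J. ideal_in D J \<and>
     (\<forall>u\<in>I. \<forall>v\<in>J. u * v \<in> principal_ideal a) \<and> a \<in> ideal_prod I J))"

lemma invertible_D: "is_domain_at e \<Longrightarrow> invertible D"
  unfolding invertible_def
proof (intro bexI conjI exI ballI)
  show "is_domain_at e \<Longrightarrow> e \<noteq> 0" by (simp add: is_domain_at_def)
  show "u * v \<in> principal_ideal e" if "u \<in> D" for u v
    using principal_ideal_mult[OF D_unit, of "u * v"] e_mult_D[OF D_mult_left[OF that]] by simp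
  show "e \<in> ideal_prod D D" using ideal_prod_mem[OF D_unit D_unit] idem by simp
qed (simp_all add: ideal_D)

text \<open>With \<open>Q M \<subseteq> (a)\<close>, the ideal \<open>a\<^sup>-\<^sup>1 M Q\<close> is inverted by some \<open>J\<close> with generator \<open>c\<close>;
  then \<open>Q J\<close> inverts \<open>M\<close> with generator \<open>a c\<close>.\<close>

lemma invertible_if_invertible_mult_preimage:
  assumes dom: "is_domain_at e" and M: "ideal_in D M" and Q: "ideal_in D Q"
    and a: "a \<in> D" "a \<noteq> 0" and QM: "\<And>u q. u \<in> M \<Longrightarrow> q \<in> Q \<Longrightarrow> q * u \<in> principal_ideal a"
    and inv: "invertible {y \<in> D. a * y \<in> ideal_prod M Q}" (is "invertible ?I")
  shows "invertible M"
proof -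
  obtain c J where c: "c \<in> D" "c \<noteq> 0" and J: "ideal_in D J"
    and IJ: "\<And>u v. u \<in> ?I \<Longrightarrow> v \<in> J \<Longrightarrow> u * v \<in> principal_ideal c"
    and c_prod: "c \<in> ideal_prod ?I J"
    using inv unfolding invertible_def by blast
  have ac: "a * c \<in> D" "a * c \<noteq> 0" using a c D_no_zero_divisors[OF dom a(1) c(1)] by auto
  have pac: "ideal_in D (principal_ideal (a * c))" by (rule ideal_principal_ideal[OF ac(1)])
  have "u * w \<in> principal_ideal (a * c)" if u: "u \<in> M" and w: "w \<in> ideal_prod Q J" for u w
    using w
  proof (induction w rule: ideal_prod.induct)
    case ideal_prod_zero
    then show ?case using ideal_zero[OF pac] by simp
  next
    case (ideal_prod_step q v w)
    obtain y where y: "y \<in> D" "q * u = a * y" using QM[OF u ideal_prod_step(1)] by (rule principal_idealE)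
    have "a * y \<in> ideal_prod M Q" using ideal_prod_mem[OF u ideal_prod_step(1)] y(2)
      by (simp add: mult.commute)
    then have "y * v \<in> principal_ideal c" using IJ ideal_prod_step(2) y(1) by blast
    then obtain s where s: "s \<in> D" "y * v = c * s" by (rule principal_idealE)
    have "u * (q * v + w) = (a * c) * s + u * w"
      using y(2) s(2) by (simp add: algebra_simps) (metis mult.commute mult.left_commute)
    then show ?case
      using ideal_add[OF pac principal_ideal_mult[OF ac(1)] ideal_prod_step(4)] by simp
  qed
  moreover have "a * t \<in> ideal_prod M (ideal_prod Q J)" if t: "t \<in> ideal_prod ?I J" for t
    using t
  proof (induction t rule: ideal_prod.induct)
    case (ideal_prod_step y v t)
    have "a * (y * v + t) = (a * y) * v + a * t" by (simp add: algebra_simps)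
    moreover have "a * y \<in> ideal_prod M Q" using ideal_prod_step(1) by blast
    ultimately show ?case
      using ideal_prod_add[OF ideal_prod_mult_mem ideal_prod_step(4)] ideal_prod_step(2) by simp
  qed (simp add: ideal_prod_zero)
  ultimately show ?thesis
    unfolding invertible_def using ac ideal_ideal_prod[OF Q] c_prod by blast
qed

lemma ideal_mult_preimage:
  assumes M: "ideal_in D M" shows "ideal_in D {y \<in> D. a * y \<in> ideal_prod M Q}"
proof (rule ideal_inI)
  show "0 \<in> {y \<in> D. a * y \<in> ideal_prod M Q}" by (simp add: ideal_prod_zero)
  show "x + y \<in> {y \<in> D. a * y \<in> ideal_prod M Q}"
    if "x \<in> {y \<in> D. a * y \<in> ideal_prod M Q}" "y \<in> {y \<in> D. a * y \<in> ideal_prod M Q}" for x y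
    using that ideal_prod_add by (auto simp: distrib_left)
  show "r * x \<in> {y \<in> D. a * y \<in> ideal_prod M Q}" if x: "x \<in> {y \<in> D. a * y \<in> ideal_prod M Q}" for x r
  proof -
    have "r * (a * x) \<in> ideal_prod M Q" using x ideal_prod_mult_left[OF _ M] by blast
    then show ?thesis using x by (auto simp: mult.left_commute)
  qed
qed blast

lemma dedekind_ideal_invertible:
  assumes DK: "dedekind_at e" and I: "ideal_in D I" "I \<noteq> {0}"
  shows "invertible I"
proof (rule ccontr)
  assume "\<not> invertible I"
  have N: "noetherian_at e" and dom: "is_domain_at e" using DK by (auto simp: dedekind_at_def)
  let ?S = "{I. ideal_in D I \<and> I \<noteq> {0} \<and> \<not> invertible I}"
  have "I \<in> ?S" using I \<open>\<not> invertible I\<close> by blast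
  then obtain M where M: "M \<in> ?S" and M_max: "\<And>X. X \<in> ?S \<Longrightarrow> M \<subseteq> X \<Longrightarrow> X = M"
    by (rule noetherian_maximal_element[OF N]) auto
  have Mi: "ideal_in D M" and M0: "M \<noteq> {0}" and M_not: "\<not> invertible M" using M by auto
  have "M \<noteq> D" using M_not invertible_D[OF dom] by blast
  then obtain P where P: "maximal_ideal_in D P" "M \<subseteq> P" by (rule maximal_ideal_exists[OF N Mi])
  obtain a where a: "a \<in> M" "a \<noteq> 0" using M0 ideal_zero[OF Mi] by blast
  have aD: "a \<in> D" using a(1) ideal_subset[OF Mi] by blast
  obtain b where b: "b \<in> D" "b \<notin> principal_ideal a" "\<And>p. p \<in> P \<Longrightarrow> b * p \<in> principal_ideal a"
    using a P by (metis maximal_ideal_inverse_nontrivial[OF DK] subsetD)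
  define Q where "Q = colon (principal_ideal a) P"
  have Qi: "ideal_in D Q" unfolding Q_def by (rule ideal_colon[OF ideal_principal_ideal[OF aD]])
  have QM: "q * u \<in> principal_ideal a" if "u \<in> M" "q \<in> Q" for u q
    using that P(2) unfolding Q_def colon_def by blast
  have aQ: "a \<in> Q" unfolding Q_def colon_def using aD principal_ideal_mult[OF aD] by blast
  have bQ: "b \<in> Q" unfolding Q_def colon_def using b by blast
  define M' where "M' = {y \<in> D. a * y \<in> ideal_prod M Q}"
  have M'_ideal: "ideal_in D M'" unfolding M'_def by (rule ideal_mult_preimage[OF Mi])
  have "M \<subseteq> M'"
    using ideal_prod_mem[OF _ aQ] ideal_subset[OF Mi] unfolding M'_def by (auto simp: mult.commute)
  moreover have "M' \<noteq> M"
  proof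
    assume "M' = M"
    have "\<exists>y\<in>M. b * x = a * y" if x: "x \<in> M" for x
    proof -
      obtain y where y: "y \<in> D" "b * x = a * y" using b(3) x P(2) by (meson principal_idealE subsetD)
      have "a * y \<in> ideal_prod M Q" using y(2) ideal_prod_mem[OF x bQ] by (simp add: mult.commute)
      with y \<open>M' = M\<close> show ?thesis unfolding M'_def by blast
    qed
    then have "b \<in> principal_ideal a"
      using colon_stable_mem_principal_ideal[OF DK Mi a aD a(2) b(1)] by blast
    with b(2) show False by blast
  qed
  moreover have "M' \<noteq> {0}" using \<open>M \<subseteq> M'\<close> a by blast
  ultimately have "invertible M'" using M_max[of M'] M'_ideal by blast
  then have "invertible M"
    using invertible_if_invertible_mult_preimage[OF dom Mi Qi aD a(2) QM] unfolding M'_def by blast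
  with M_not show False by blast
qed

definition multiplication_ideal :: "'a set \<Rightarrow> bool" where
  "multiplication_ideal X \<longleftrightarrow> (\<forall>J. ideal_in D J \<and> J \<subseteq> X \<longrightarrow> J \<subseteq> ideal_prod (colon J X) X)"

lemma multiplication_ideal_D: "multiplication_ideal D"
  unfolding multiplication_ideal_def
proof (intro allI impI subsetI)
  fix J y assume J: "ideal_in D J \<and> J \<subseteq> D" and y: "y \<in> J"
  then have "y \<in> colon J D" unfolding colon_def using ideal_mult_right by blast
  then have "y * e \<in> ideal_prod (colon J D) D" by (rule ideal_prod_mem) simp
  then show "y \<in> ideal_prod (colon J D) D" using D_mult_e J y by auto
qed

text \<open>If \<open>X J' = (a)\<close> and \<open>y \<in> J \<subseteq> X\<close>, then every \<open>y v/a\<close> with \<open>v \<in> J'\<close> lies in \<open>J : X\<close>, and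
  \<open>a y = \<Sum> y u v\<close> over a representation \<open>a = \<Sum> u v\<close> exhibits \<open>y \<in> (J : X) X\<close>.\<close>

lemma invertible_multiplication_ideal:
  assumes dom: "is_domain_at e" and X: "ideal_in D X" and inv: "invertible X"
  shows "multiplication_ideal X"
  unfolding multiplication_ideal_def
proof (intro allI impI subsetI)
  fix J y assume J: "ideal_in D J \<and> J \<subseteq> X" and y: "y \<in> J"
  have yX: "y \<in> X" using J y by blast
  have yD: "y \<in> D" using yX ideal_subset[OF X] by blast
  let ?K = "colon J X"
  obtain a J' where a: "a \<in> D" "a \<noteq> 0"
    and XJ': "\<And>u v. u \<in> X \<Longrightarrow> v \<in> J' \<Longrightarrow> u * v \<in> principal_ideal a"
    and a_prod: "a \<in> ideal_prod X J'"
    using inv unfolding invertible_def by blast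
  have "\<exists>z\<in>ideal_prod ?K X. y * t = a * z" if t: "t \<in> ideal_prod X J'" for t
    using t
  proof (induction t rule: ideal_prod.induct)
    case ideal_prod_zero
    show ?case using ideal_prod.ideal_prod_zero by force
  next
    case (ideal_prod_step u v t)
    then obtain z where z: "z \<in> ideal_prod ?K X" "y * t = a * z" by blast
    obtain k where k: "k \<in> D" "y * v = a * k"
      using XJ'[OF yX ideal_prod_step(2)] by (rule principal_idealE)
    have "k \<in> ?K" unfolding colon_def
    proof (intro CollectI conjI ballI)
      show "k \<in> D" by (rule k(1))
      fix x assume x: "x \<in> X"
      obtain s where s: "s \<in> D" "x * v = a * s"
        using XJ'[OF x ideal_prod_step(2)] by (rule principal_idealE)
      have "a * (k * x) = a * (y * s)" using k(2) s(2) by (metis mult.assoc mult.commute)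
      then have "k * x = y * s"
        using D_mult_cancel[OF dom a] k(1) yD ideal_subset[OF X] x by blast
      then show "k * x \<in> J" using ideal_mult_right[of J y s] J y by simp
    qed
    then have "k * u + z \<in> ideal_prod ?K X"
      using ideal_prod.ideal_prod_step[OF _ ideal_prod_step(1) z(1)] by blast
    moreover have "y * (u * v + t) = a * (k * u + z)"
      using k(2) z(2) by (simp add: algebra_simps)
    ultimately show ?case by blast
  qed
  then obtain z where z: "z \<in> ideal_prod ?K X" "y * a = a * z" using a_prod by blast
  have "z \<in> D" using ideal_prod_subset[OF z(1)] unfolding colon_def by blast
  then have "y = z" using D_mult_cancel[OF dom a yD] z(2) by (simp add: mult.commute)
  with z(1) show "y \<in> ideal_prod ?K X" by simp
qed

section \<open>Artinian local principal ideal rings\<close>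

lemma local_nonzero:
  assumes "local_at e" shows "e \<noteq> 0"
proof
  assume "e = 0"
  then have "D = {0}" using mem_D_iff by auto
  obtain P where P: "maximal_ideal_in D P" using assms unfolding local_at_def by blast
  have "P \<subseteq> D" "0 \<in> P"
    using ideal_subset[OF maximal_ideal_ideal[OF P]] ideal_zero[OF maximal_ideal_ideal[OF P]] by auto
  then have "P = D" using \<open>D = {0}\<close> by auto
  with maximal_ideal_proper[OF P] show False by blast
qed

lemma pir_noetherian: "pir_at e \<Longrightarrow> noetherian_at e"
  unfolding noetherian_at_def
proof (intro allI impI)
  fix I assume "pir_at e" and I: "ideal_in D I"
  then obtain a where a: "a \<in> D" "I = {d * a | d. d \<in> D}" unfolding pir_at_def by blast
  have "I = ideal_gen_in D {a}" unfolding a(2) ideal_gen_in_def by auto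
  moreover have "a = e * a" using e_mult_D[OF a(1)] by simp
  then have "a \<in> I" unfolding a(2) using D_unit by blast
  ultimately show "\<exists>F. finite F \<and> F \<subseteq> I \<and> I = ideal_gen_in D F" by (intro exI[of _ "{a}"]) simp
qed

lemma local_unit_outside_maximal:
  assumes N: "noetherian_at e" and L: "local_at e" and P: "maximal_ideal_in D P"
    and u: "u \<in> D" "u \<notin> P"
  shows "\<exists>w\<in>D. w * u = e"
proof (rule ccontr)
  assume no_inverse: "\<not> (\<exists>w\<in>D. w * u = e)"
  have "e \<notin> principal_ideal u"
  proof
    assume "e \<in> principal_ideal u"
    then obtain w where "w \<in> D" "e = u * w" by (rule principal_idealE)
    with no_inverse show False by (metis mult.commute)
  qed
  then have "principal_ideal u \<noteq> D" by auto
  then obtain M where "maximal_ideal_in D M" "principal_ideal u \<subseteq> M"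
    by (rule maximal_ideal_exists[OF N ideal_principal_ideal[OF u(1)]])
  moreover have "M = P" if "maximal_ideal_in D M" for M
    using L P that unfolding local_at_def by blast
  ultimately show False using principal_ideal_self[OF u(1)] u(2) by blast
qed

text \<open>An Artinian local principal ideal ring is a quotient of a discrete valuation ring: its
  maximal ideal \<open>(p)\<close> is nilpotent, and everything outside \<open>(p)\<close> is a unit. Nilpotency comes from
  the stabilising chain \<open>(p\<^sup>k)\<close>: \<open>p\<^sup>k = p\<^sup>k\<^sup>+\<^sup>1 d\<close> makes \<open>p\<^sup>k (1 - p d) = 0\<close> with \<open>1 - p d\<close> a unit.\<close>

lemma artinian_powers_stabilize:
  assumes art: "artinian_at e" and p: "p \<in> D"
  obtains K d where "d \<in> D" "p ^ Suc K = p ^ Suc (Suc K) * d"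
proof -
  define f where "f k = principal_ideal (p ^ Suc k)" for k
  have pk: "p ^ Suc k \<in> D" for k using D_power[OF p, of "Suc k"] by simp
  have f_dec: "f (Suc k) \<subseteq> f k" for k
  proof
    fix x assume "x \<in> f (Suc k)"
    then obtain d where "x = p ^ Suc (Suc k) * d" unfolding f_def by (rule principal_idealE)
    then have "x = p ^ Suc k * (p * d)" by (simp add: algebra_simps)
    then show "x \<in> f k" unfolding f_def using principal_ideal_mult[OF pk] by simp
  qed
  have f_ideal: "ideal_in D (f k)" for k unfolding f_def by (rule ideal_principal_ideal[OF pk])
  have "\<exists>K. \<forall>k\<ge>K. f k = f K"
    by (intro art[unfolded artinian_at_def, rule_format] conjI allI f_dec f_ideal)
  then obtain K where K: "\<And>k. k \<ge> K \<Longrightarrow> f k = f K" by blast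
  have "p ^ Suc K \<in> f (Suc K)" using K[of "Suc K"] principal_ideal_self[OF pk] f_def by simp
  then obtain d where "d \<in> D" "p ^ Suc K = p ^ Suc (Suc K) * d"
    unfolding f_def by (rule principal_idealE)
  then show thesis by (rule that)
qed

lemma artinian_local_pir_structure:
  assumes L: "artinian_local_pir_at e"
  obtains p K where "p \<in> D" "p ^ K = 0"
    "\<And>u. u \<in> D \<Longrightarrow> (\<exists>d\<in>D. u = d * p) \<or> (\<exists>w\<in>D. w * u = e)"
proof -
  have art: "artinian_at e" and loc: "local_at e" and pir: "pir_at e"
    using L by (auto simp: artinian_local_pir_at_def)
  have N: "noetherian_at e" by (rule pir_noetherian[OF pir])
  obtain P where P: "maximal_ideal_in D P" using loc unfolding local_at_def by blast
  note Pi = maximal_ideal_ideal[OF P]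
  obtain p where p: "p \<in> D" "P = {d * p | d. d \<in> D}" using pir Pi unfolding pir_at_def by blast
  have unit: "\<exists>w\<in>D. w * u = e" if "u \<in> D" "u \<notin> P" for u
    by (rule local_unit_outside_maximal[OF N loc P that])
  have dichotomy: "(\<exists>d\<in>D. u = d * p) \<or> (\<exists>w\<in>D. w * u = e)" if "u \<in> D" for u
    using unit[OF that] p(2) by auto
  obtain K d where d: "d \<in> D" "p ^ Suc K = p ^ Suc (Suc K) * d"
    using artinian_powers_stabilize[OF art p(1)] by blast
  have pK: "p ^ Suc K \<in> D" using D_power[OF p(1), of "Suc K"] by simp
  have "e - p * d \<notin> P"
  proof
    assume "e - p * d \<in> P"
    moreover have "p * d \<in> P" unfolding p(2) using d(1) by (auto simp: mult.commute)
    ultimately have "(e - p * d) + p * d \<in> P" by (rule ideal_add[OF Pi])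
    then have "e \<in> P" by simp
    then show False using ideal_eq_D_if_unit[OF Pi] maximal_ideal_proper[OF P] by blast
  qed
  moreover have "e - p * d \<in> D" by (intro D_diff D_unit D_mult_left[OF p(1)])
  ultimately obtain w where w: "w \<in> D" "w * (e - p * d) = e" using unit by blast
  have "p ^ Suc K * (e - p * d) = 0"
    using d(2) D_mult_e[OF pK] by (simp add: algebra_simps)
  have "p ^ Suc K = p ^ Suc K * (w * (e - p * d))" using w(2) D_mult_e[OF pK] by simp
  also have "\<dots> = w * (p ^ Suc K * (e - p * d))" by (simp add: mult.left_commute)
  finally have "p ^ Suc K = 0" using \<open>p ^ Suc K * (e - p * d) = 0\<close> by simp
  then show thesis by (rule that[OF p(1) _ dichotomy])
qed

end

section \<open>Modules over a direct factor\<close>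

lemma module_iso_sets_inverse:
  assumes g: "bij_betw g A B" and add: "\<And>x y. x \<in> A \<Longrightarrow> y \<in> A \<Longrightarrow> g (x + y) = g x + g y"
    and sc: "\<And>r x. x \<in> A \<Longrightarrow> g (s1 r x) = s2 r (g x)"
    and A_add: "\<And>x y. x \<in> A \<Longrightarrow> y \<in> A \<Longrightarrow> x + y \<in> A"
    and A_scale: "\<And>r x. x \<in> A \<Longrightarrow> s1 r x \<in> A"
  shows "module_iso_sets s2 B s1 A"
  unfolding module_iso_sets_def
proof (intro exI conjI ballI allI)
  let ?f = "the_inv_into A g"
  show "bij_betw ?f B A" by (rule bij_betw_the_inv_into[OF g])
  have inj: "inj_on g A" using g by (simp add: bij_betw_def)
  have f: "?f y \<in> A" "g (?f y) = y" if "y \<in> B" for y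
    using g that by (metis bij_betw_def f_the_inv_into_f the_inv_into_into order_refl)+
  show "?f (x + y) = ?f x + ?f y" if "x \<in> B" "y \<in> B" for x y
    using the_inv_into_f_f[OF inj A_add[OF f(1) f(1)]] add[OF f(1) f(1)] f(2) that by metis
  show "?f (s2 r x) = s1 r (?f x)" if "x \<in> B" for r x
    using the_inv_into_f_f[OF inj A_scale[OF f(1)]] sc[OF f(1)] f(2) that by metis
qed

context module
begin

lemma subspace_kernel: "subspace {z. scale c z = 0}"
  unfolding subspace_def
  by (auto simp: scale_right_distrib) (metis mult.commute scale_scale scale_zero_right)

text \<open>In a multiplication module the cyclic submodule \<open>R m\<close> has the form \<open>I M\<close>.\<close>

lemma multiplication_module_cyclic:
  assumes "multiplication_module scale"
  obtains I where "\<And>r y. r \<in> I \<Longrightarrow> \<exists>s. scale r y = scale s m"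
    "\<And>T. subspace T \<Longrightarrow> (\<And>r y. r \<in> I \<Longrightarrow> scale r y \<in> T) \<Longrightarrow> m \<in> T"
proof -
  obtain I where I: "span {m} = span {scale r y | r y. r \<in> I}"
    using assms subspace_span[of "{m}"] unfolding multiplication_module_def by blast
  show thesis
  proof (rule that)
    fix r y assume "r \<in> I"
    then have "scale r y \<in> span {scale r y | r y. r \<in> I}" by (intro span_base) blast
    then show "\<exists>s. scale r y = scale s m" using I span_singleton by auto
  next
    fix T assume "subspace T" "\<And>r y. r \<in> I \<Longrightarrow> scale r y \<in> T"
    then have "span {scale r y | r y. r \<in> I} \<subseteq> T" by (intro span_minimal) blast+
    then show "m \<in> T" using I span_base[of m "{m}"] by blast
  qed
qed

lemma multiplication_moduleI:
  assumes "\<And>N. subspace N \<Longrightarrow> N \<subseteq> span {scale r m | r m. \<forall>y. scale r y \<in> N}"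
  shows "multiplication_module scale"
  unfolding multiplication_module_def
proof (intro allI impI)
  fix N assume N: "subspace N"
  let ?I = "{r. \<forall>y. scale r y \<in> N}"
  have "ideal ?I" unfolding ideal_def ideal_in_def
    using subspace_0[OF N] subspace_add[OF N] subspace_scale[OF N]
    by (auto simp: scale_left_distrib simp flip: scale_scale)
  moreover have "span {scale r m | r m. r \<in> ?I} \<subseteq> N" by (rule span_minimal[OF _ N]) blast
  then have "N = span {scale r m | r m. r \<in> ?I}" using assms[OF N] by auto
  ultimately show "\<exists>I. ideal I \<and> N = span {scale r m | r m. r \<in> I}" by blast
qed

lemma faithful_moduleI_idempotents:
  assumes sum1: "(\<Sum>i<n. e i) = 1"
    and annihilator: "\<And>i r. i < n \<Longrightarrow> (\<And>m. scale r m = 0) \<Longrightarrow> r * e i = 0"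
  shows "faithful_module scale"
  unfolding faithful_module_def
proof (intro allI impI)
  fix r assume "\<forall>m. scale r m = 0"
  then have "r * e i = 0" if "i < n" for i using annihilator[OF that] by blast
  then show "r = 0" using sum1 sum_distrib_left[of r e "{..<n}"] by simp
qed

lemma multiplication_moduleI_idempotents:
  assumes sum1: "(\<Sum>i<n. e i) = 1"
    and component: "\<And>i N z. i < n \<Longrightarrow> subspace N \<Longrightarrow> z \<in> N \<Longrightarrow>
      scale (e i) z \<in> span {scale r m | r m. \<forall>y. scale r y \<in> N}"
  shows "multiplication_module scale"
proof (rule multiplication_moduleI, rule subsetI)
  fix N z assume N: "subspace N" and z: "z \<in> N"
  have "z = (\<Sum>i<n. scale (e i) z)" using sum1 scale_sum_left[of e "{..<n}" z] by simp
  then show "z \<in> span {scale r m | r m. \<forall>y. scale r y \<in> N}"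
    using component[OF _ N z] by (metis (no_types, lifting) lessThan_iff span_sum)
qed

end

locale factor_module = direct_factor e + module scale
  for e :: "'a::comm_ring_1" and scale :: "'a \<Rightarrow> 'm::ab_group_add \<Rightarrow> 'm"
begin

abbreviation eM :: "'m set" where "eM \<equiv> range (scale e)"

lemma mem_eM_iff: "z \<in> eM \<longleftrightarrow> scale e z = z"
  by (metis idem rangeE rangeI scale_scale)

lemma scale_D_eM: "d \<in> D \<Longrightarrow> scale d m = scale d (scale e m)"
  using D_mult_e[of d] by simp

lemma eM_zero: "0 \<in> eM"
  and eM_add: "z \<in> eM \<Longrightarrow> z' \<in> eM \<Longrightarrow> z + z' \<in> eM"
  and eM_diff: "z \<in> eM \<Longrightarrow> z' \<in> eM \<Longrightarrow> z - z' \<in> eM"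
  and eM_scale_D: "d \<in> D \<Longrightarrow> scale d m \<in> eM"
  by (simp_all add: mem_eM_iff scale_right_distrib scale_right_diff_distrib e_mult_D)

lemma eM_scale: "z \<in> eM \<Longrightarrow> scale c z \<in> eM"
  unfolding mem_eM_iff by (metis scale_left_commute)

lemma faithful_D_zero:
  assumes "faithful_module scale" "d \<in> D" "\<And>z. z \<in> eM \<Longrightarrow> scale d z = 0"
  shows "d = 0"
  using assms scale_D_eM[OF assms(2)] unfolding faithful_module_def by (metis rangeI)

lemma ideal_image_submodule:
  assumes \<phi>_D: "\<And>z. z \<in> eM \<Longrightarrow> \<phi> z \<in> D"
    and \<phi>_add: "\<And>z z'. z \<in> eM \<Longrightarrow> z' \<in> eM \<Longrightarrow> \<phi> (z + z') = \<phi> z + \<phi> z'"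
    and \<phi>_scale: "\<And>c z. z \<in> eM \<Longrightarrow> \<phi> (scale c z) = c * \<phi> z"
    and N: "subspace N"
  shows "ideal_in D (\<phi> ` (N \<inter> eM))"
proof (rule ideal_inI)
  show "\<phi> ` (N \<inter> eM) \<subseteq> D" using \<phi>_D by blast
  have "\<phi> 0 = 0" using \<phi>_add[OF eM_zero eM_zero] by simp
  then show "0 \<in> \<phi> ` (N \<inter> eM)" using subspace_0[OF N] eM_zero by force
  show "x + y \<in> \<phi> ` (N \<inter> eM)" if xy: "x \<in> \<phi> ` (N \<inter> eM)" "y \<in> \<phi> ` (N \<inter> eM)" for x y
  proof -
    obtain u v where uv: "u \<in> N \<inter> eM" "v \<in> N \<inter> eM" "x = \<phi> u" "y = \<phi> v" using xy by blast
    then have "x + y = \<phi> (u + v)" "u + v \<in> N \<inter> eM"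
      using \<phi>_add subspace_add[OF N] eM_add by auto
    then show ?thesis by blast
  qed
  show "r * x \<in> \<phi> ` (N \<inter> eM)" if x: "x \<in> \<phi> ` (N \<inter> eM)" for x r
  proof -
    obtain u where u: "u \<in> N \<inter> eM" "x = \<phi> u" using x by blast
    then have "r * x = \<phi> (scale r u)" "scale r u \<in> N \<inter> eM"
      using \<phi>_scale subspace_scale[OF N] eM_scale by auto
    then show ?thesis by blast
  qed
qed

text \<open>Over a domain factor, \<open>eM\<close> is torsion-free: if \<open>x m = 0\<close>, then \<open>x I M = 0\<close> for the ideal with
  \<open>I M = R m\<close>, so faithfulness forces \<open>x (e I) = 0\<close>, hence \<open>e I = 0\<close> and \<open>m \<in> I M\<close> is killed by \<open>e\<close>.\<close>

lemma faithful_multiplication_torsion_free: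
  assumes FM: "faithful_module scale" and MM: "multiplication_module scale"
    and dom: "is_domain_at e" and m: "m \<in> eM" and x: "x \<in> D" "x \<noteq> 0" and xm: "scale x m = 0"
  shows "m = 0"
proof -
  obtain I where I_cyclic: "\<And>r y. r \<in> I \<Longrightarrow> \<exists>s. scale r y = scale s m"
    and I_gen: "\<And>T. subspace T \<Longrightarrow> (\<And>r y. r \<in> I \<Longrightarrow> scale r y \<in> T) \<Longrightarrow> m \<in> T"
    using multiplication_module_cyclic[OF MM, where m = m] by blast
  have "scale r y \<in> {z. scale e z = 0}" if r: "r \<in> I" for r y
  proof -
    have "scale (x * r) y' = 0" for y'
    proof -
      obtain s where s: "scale r y' = scale s m" using I_cyclic[OF r] by blast
      have "scale (x * r) y' = scale x (scale s m)" by (simp add: s flip: scale_scale)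
      also have "\<dots> = scale s (scale x m)" by (rule scale_left_commute)
      finally show ?thesis using xm by simp
    qed
    then have "x * r = 0" using FM unfolding faithful_module_def by blast
    then have "x * (e * r) = 0" by (simp add: mult.left_commute)
    then have "e * r = 0" using D_no_zero_divisors[OF dom x(1) D_mult_left[OF D_unit]] x(2) by blast
    then show ?thesis by simp
  qed
  then have "scale e m = 0" using I_gen[OF subspace_kernel] by blast
  then show ?thesis using m mem_eM_iff by simp
qed

text \<open>Faithful multiplication over a Dedekind factor: choose \<open>m \<noteq> 0\<close> in \<open>eM\<close> and \<open>a \<noteq> 0\<close> with
  \<open>a eM \<subseteq> D m\<close>; by torsion-freeness \<open>z \<mapsto> a z / m\<close> embeds \<open>eM\<close> into \<open>D\<close> as an ideal.\<close>

lemma iso_ideal_if_torsion_free: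
  assumes tf: "\<And>z x. z \<in> eM \<Longrightarrow> x \<in> D \<Longrightarrow> x \<noteq> 0 \<Longrightarrow> scale x z = 0 \<Longrightarrow> z = 0"
    and m: "m \<in> eM" "m \<noteq> 0" and a: "a \<in> D" "a \<noteq> 0"
    and a_eM: "\<And>z. z \<in> eM \<Longrightarrow> \<exists>d\<in>D. scale a z = scale d m"
  shows "\<exists>X. ideal_in D X \<and> X \<noteq> {0} \<and> module_iso_sets scale eM (*) X"
proof -
  have uniq: "d = d'" if "d \<in> D" "d' \<in> D" "scale d m = scale d' m" for d d'
  proof (rule ccontr)
    assume "d \<noteq> d'"
    moreover have "scale (d - d') m = 0" using that(3) by (simp add: scale_left_diff_distrib)
    ultimately show False using tf[OF m(1) D_diff[OF that(1,2)]] m(2) by simp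
  qed
  define \<phi> where "\<phi> z = (THE d. d \<in> D \<and> scale a z = scale d m)" for z
  have \<phi>: "\<phi> z \<in> D \<and> scale a z = scale (\<phi> z) m" if z: "z \<in> eM" for z
  proof -
    obtain d where "d \<in> D" "scale a z = scale d m" using a_eM[OF z] by blast
    then have "\<exists>!d. d \<in> D \<and> scale a z = scale d m" using uniq by (intro ex1I[of _ d]) auto
    then show ?thesis unfolding \<phi>_def by (rule theI')
  qed
  have \<phi>_eq: "\<phi> z = d" if "z \<in> eM" "d \<in> D" "scale a z = scale d m" for z d
    using uniq[of "\<phi> z" d] \<phi>[OF that(1)] that by simp
  have \<phi>_add: "\<phi> (z + z') = \<phi> z + \<phi> z'" if "z \<in> eM" "z' \<in> eM" for z z'
    using \<phi>_eq[OF eM_add[OF that]] \<phi>[OF that(1)] \<phi>[OF that(2)]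
    by (simp add: D_add scale_right_distrib scale_left_distrib)
  have \<phi>_scale: "\<phi> (scale c z) = c * \<phi> z" if "z \<in> eM" for z c
  proof (rule \<phi>_eq[OF eM_scale[OF that] D_mult_right])
    show "\<phi> z \<in> D" using \<phi>[OF that] by blast
    have "scale a (scale c z) = scale c (scale a z)" by (rule scale_left_commute)
    then show "scale a (scale c z) = scale (c * \<phi> z) m" using \<phi>[OF that] by simp
  qed
  have "inj_on \<phi> eM"
  proof (rule inj_onI)
    fix z z' assume zz: "z \<in> eM" "z' \<in> eM" "\<phi> z = \<phi> z'"
    then have "scale a (z - z') = 0" using \<phi>[OF zz(1)] \<phi>[OF zz(2)] by (simp add: scale_right_diff_distrib)
    then show "z = z'" using tf[OF eM_diff[OF zz(1,2)] a] by simp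
  qed
  moreover have "ideal_in D (\<phi> ` eM)"
    using ideal_image_submodule[OF _ \<phi>_add \<phi>_scale subspace_UNIV] \<phi> by simp
  moreover have "a \<in> \<phi> ` eM" using \<phi>_eq[OF m(1) a(1)] m(1) by (metis image_eqI)
  ultimately show ?thesis
    using a(2) \<phi>_add \<phi>_scale unfolding module_iso_sets_def bij_betw_def by blast
qed

lemma faithful_multiplication_dedekind_iso_ideal:
  assumes FM: "faithful_module scale" and MM: "multiplication_module scale" and DK: "dedekind_at e"
  shows "\<exists>X. ideal_in D X \<and> X \<noteq> {0} \<and> module_iso_sets scale eM (*) X"
proof -
  have dom: "is_domain_at e" using DK by (simp add: dedekind_at_def)
  then have "e \<noteq> 0" by (simp add: is_domain_at_def)
  then obtain m0 where "scale e m0 \<noteq> 0" using FM unfolding faithful_module_def by blast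
  define m where "m = scale e m0"
  have m: "m \<in> eM" "m \<noteq> 0" using \<open>scale e m0 \<noteq> 0\<close> by (auto simp: m_def)
  obtain I where I_cyclic: "\<And>r y. r \<in> I \<Longrightarrow> \<exists>s. scale r y = scale s m"
    and I_gen: "\<And>T. subspace T \<Longrightarrow> (\<And>r y. r \<in> I \<Longrightarrow> scale r y \<in> T) \<Longrightarrow> m \<in> T"
    using multiplication_module_cyclic[OF MM, where m = m] by blast
  have "\<not> (\<forall>r\<in>I. \<forall>y. scale r y \<in> {z. scale e z = 0})"
  proof
    assume "\<forall>r\<in>I. \<forall>y. scale r y \<in> {z. scale e z = 0}"
    then have "scale e m = 0" using I_gen[OF subspace_kernel] by blast
    with m show False using mem_eM_iff by simp
  qed
  then obtain r y where r: "r \<in> I" "scale e (scale r y) \<noteq> 0" by blast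
  define a where "a = e * r"
  have a: "a \<in> D" "a \<noteq> 0" using r(2) by (auto simp: a_def)
  have a_eM: "\<exists>d\<in>D. scale a z = scale d m" if z: "z \<in> eM" for z
  proof -
    obtain s where s: "scale r z = scale s m" using I_cyclic[OF r(1)] by blast
    have "scale a z = scale r (scale e z)" by (simp add: a_def mult.commute)
    also have "\<dots> = scale s (scale e m)" using s z m(1) mem_eM_iff by simp
    also have "\<dots> = scale (s * e) m" by simp
    finally show ?thesis using D_mult_right[OF D_unit, of s] by blast
  qed
  show ?thesis
    by (rule iso_ideal_if_torsion_free[OF faithful_multiplication_torsion_free[OF FM MM dom] m a a_eM])
qed

lemma nilpotent_scale_not_surjective:
  assumes FM: "faithful_module scale" and "e \<noteq> 0" and nilpotent: "p ^ K = 0"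
  shows "\<exists>m\<in>eM. \<forall>z\<in>eM. m \<noteq> scale p z"
proof (rule ccontr)
  assume "\<not> ?thesis"
  then have divisible: "\<And>w. w \<in> eM \<Longrightarrow> \<exists>z\<in>eM. w = scale p z" by blast
  have "\<exists>z\<in>eM. w = scale (p ^ k) z" if w: "w \<in> eM" for w k
  proof (induction k)
    case 0
    then show ?case using w by simp
  next
    case (Suc k)
    then obtain z z' where "z' \<in> eM" "w = scale (p ^ k) z" "z = scale p z'"
      using divisible by blast
    then show ?case by (auto simp: mult.commute)
  qed
  then have "scale e y = 0" for y using nilpotent by (metis rangeI scale_zero_left)
  with FM \<open>e \<noteq> 0\<close> show False unfolding faithful_module_def by blast
qed

lemma subspace_scale_preimage: "subspace {w. \<exists>z\<in>eM. scale e w = scale p z}"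
  unfolding subspace_def
proof (intro conjI ballI allI)
  have "scale e 0 = scale p 0" by simp
  then show "0 \<in> {w. \<exists>z\<in>eM. scale e w = scale p z}" using eM_zero by blast
  fix x y assume "x \<in> {w. \<exists>z\<in>eM. scale e w = scale p z}" "y \<in> {w. \<exists>z\<in>eM. scale e w = scale p z}"
  then obtain z z' where "z \<in> eM" "scale e x = scale p z" "z' \<in> eM" "scale e y = scale p z'"
    by blast
  then have "scale e (x + y) = scale p (z + z')" "z + z' \<in> eM"
    by (simp_all add: scale_right_distrib eM_add)
  then show "x + y \<in> {w. \<exists>z\<in>eM. scale e w = scale p z}" by blast
next
  fix c x assume "x \<in> {w. \<exists>z\<in>eM. scale e w = scale p z}"
  then obtain z where z: "z \<in> eM" "scale e x = scale p z" by blast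
  have "scale e (scale c x) = scale p (scale c z)"
    using z(2) by (metis scale_left_commute)
  then show "scale c x \<in> {w. \<exists>z\<in>eM. scale e w = scale p z}" using eM_scale[OF z(1)] by blast
qed

lemma iso_D_if_generated:
  assumes FM: "faithful_module scale" and m: "m \<in> eM"
    and cyclic: "\<And>z. z \<in> eM \<Longrightarrow> \<exists>c\<in>D. z = scale c m"
  shows "module_iso_sets scale eM (*) D"
proof (rule module_iso_sets_inverse)
  show "bij_betw (\<lambda>d. scale d m) D eM" unfolding bij_betw_def
  proof
    show "inj_on (\<lambda>d. scale d m) D"
    proof (rule inj_onI)
      fix d d' assume dd: "d \<in> D" "d' \<in> D" "scale d m = scale d' m"
      have "scale (d - d') z = 0" if z: "z \<in> eM" for z
      proof -
        obtain c where "z = scale c m" using cyclic[OF z] by blast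
        then have "scale (d - d') z = scale c (scale (d - d') m)" by (simp only: scale_left_commute)
        then show ?thesis using dd(3) by (simp add: scale_left_diff_distrib)
      qed
      then show "d = d'" using faithful_D_zero[OF FM D_diff[OF dd(1,2)]] by simp
    qed
    show "(\<lambda>d. scale d m) ` D = eM" using eM_scale_D cyclic by blast
  qed
qed (auto simp: scale_left_distrib)

text \<open>Over an Artinian local principal ideal ring with maximal ideal \<open>(p)\<close>, \<open>p\<^sup>K = 0\<close> forces
  \<open>p eM \<noteq> eM\<close>. An element \<open>m \<notin> p eM\<close> generates \<open>eM\<close>: some \<open>r\<close> with \<open>I M = R m\<close> must have \<open>e r\<close>
  outside \<open>(p)\<close>, i.e. a unit, and then \<open>z = (e r)\<^sup>-\<^sup>1 r z \<in> D m\<close>.\<close>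

lemma faithful_multiplication_local_iso_D:
  assumes FM: "faithful_module scale" and MM: "multiplication_module scale"
    and L: "artinian_local_pir_at e"
  shows "module_iso_sets scale eM (*) D"
proof -
  obtain p K where p: "p \<in> D" "p ^ K = 0"
    and dichotomy: "\<And>u. u \<in> D \<Longrightarrow> (\<exists>d\<in>D. u = d * p) \<or> (\<exists>w\<in>D. w * u = e)"
    using artinian_local_pir_structure[OF L] by blast
  have "e \<noteq> 0" using L local_nonzero by (simp add: artinian_local_pir_at_def)
  then have "\<exists>m\<in>eM. \<forall>z\<in>eM. m \<noteq> scale p z" by (rule nilpotent_scale_not_surjective[OF FM _ p(2)])
  then obtain m where m: "m \<in> eM" and m_indivisible: "\<And>z. z \<in> eM \<Longrightarrow> m \<noteq> scale p z" by blast
  obtain I where I_cyclic: "\<And>r y. r \<in> I \<Longrightarrow> \<exists>s. scale r y = scale s m"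
    and I_gen: "\<And>T. subspace T \<Longrightarrow> (\<And>r y. r \<in> I \<Longrightarrow> scale r y \<in> T) \<Longrightarrow> m \<in> T"
    using multiplication_module_cyclic[OF MM, where m = m] by blast
  let ?T = "{w. \<exists>z\<in>eM. scale e w = scale p z}"
  have T: "subspace ?T" by (rule subspace_scale_preimage)
  obtain r where r: "r \<in> I" "\<not> (\<exists>d\<in>D. e * r = d * p)"
  proof -
    have "m \<notin> ?T"
    proof
      assume "m \<in> ?T"
      then obtain z where "z \<in> eM" "scale e m = scale p z" by blast
      with m_indivisible m show False using mem_eM_iff by metis
    qed
    then have "\<not> (\<forall>r\<in>I. \<exists>d\<in>D. e * r = d * p)"
    proof (rule contrapos_nn)
      assume A: "\<forall>r\<in>I. \<exists>d\<in>D. e * r = d * p"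
      show "m \<in> ?T"
      proof (rule I_gen[OF T])
        fix r y assume "r \<in> I"
        then obtain d where d: "d \<in> D" "e * r = d * p" using A by blast
        have "scale e (scale r y) = scale p (scale d y)" using d(2) by (simp add: mult.commute)
        then show "scale r y \<in> ?T" using eM_scale_D[OF d(1)] by blast
      qed
    qed
    then show thesis using that by blast
  qed
  obtain w where w: "w \<in> D" "w * (e * r) = e"
    using dichotomy[OF D_mult_left[OF D_unit]] r(2) by blast
  show ?thesis
  proof (rule iso_D_if_generated[OF FM m])
    fix z assume z: "z \<in> eM"
    obtain s where s: "scale r z = scale s m" using I_cyclic[OF r(1)] by blast
    have "z = scale (w * (e * r)) z" using w(2) z mem_eM_iff by simp
    also have "\<dots> = scale w (scale r (scale e z))" by (simp add: ac_simps)
    also have "\<dots> = scale w (scale s (scale e m))" using z m s mem_eM_iff by simp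
    also have "\<dots> = scale (e * (w * s)) m" by (simp add: ac_simps)
    finally show "\<exists>c\<in>D. z = scale c m" using D_mult_left[OF D_unit] by blast
  qed
qed

definition standard_component :: bool where
  "standard_component \<longleftrightarrow> module_iso_sets scale eM (*) D \<or>
     (dedekind_at e \<and> (\<exists>I. ideal_in D I \<and> I \<noteq> {0} \<and> module_iso_sets scale eM (*) I))"

lemma standard_component_if_faithful_multiplication:
  assumes "faithful_module scale" "multiplication_module scale"
    and "dedekind_at e \<or> artinian_local_pir_at e"
  shows standard_component
  using assms faithful_multiplication_dedekind_iso_ideal faithful_multiplication_local_iso_D
  unfolding standard_component_def by blast

lemma standard_componentE:
  assumes standard_component
  obtains X where "module_iso_sets scale eM (*) X" "ideal_in D X" "multiplication_ideal X"
    "X = D \<or> (is_domain_at e \<and> X \<noteq> {0})"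
proof -
  consider "module_iso_sets scale eM (*) D"
    | X where "dedekind_at e" "ideal_in D X" "X \<noteq> {0}" "module_iso_sets scale eM (*) X"
    using assms unfolding standard_component_def by blast
  then show thesis
  proof cases
    case 1
    then show thesis using that ideal_D multiplication_ideal_D by blast
  next
    case (2 X)
    then have "multiplication_ideal X" "is_domain_at e"
      using invertible_multiplication_ideal dedekind_ideal_invertible
      by (auto simp: dedekind_at_def)
    then show thesis using that 2 by blast
  qed
qed

lemma standard_component_annihilator:
  assumes standard_component and r: "\<And>m. scale r m = 0"
  shows "r * e = 0"
proof -
  obtain X where iso: "module_iso_sets scale eM (*) X" and X: "ideal_in D X"
    and X': "X = D \<or> (is_domain_at e \<and> X \<noteq> {0})"
    by (rule standard_componentE[OF assms(1)])
  then obtain g where g: "bij_betw g eM X" "\<And>x y. x \<in> eM \<Longrightarrow> y \<in> eM \<Longrightarrow> g (x + y) = g x + g y"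
    "\<And>r x. x \<in> eM \<Longrightarrow> g (scale r x) = r * g x"
    unfolding module_iso_sets_def by blast
  have "g 0 = 0" using g(2)[OF eM_zero eM_zero] by simp
  have rx: "r * x = 0" if x: "x \<in> X" for x
  proof -
    obtain z where z: "z \<in> eM" "x = g z" using x g(1) unfolding bij_betw_def by blast
    have "r * x = g (scale r z)" using g(3)[OF z(1)] z(2) by simp
    then show ?thesis using r \<open>g 0 = 0\<close> by simp
  qed
  from X' show ?thesis
  proof
    assume "X = D"
    then show ?thesis using rx[of e] by simp
  next
    assume X': "is_domain_at e \<and> X \<noteq> {0}"
    then obtain x where x: "x \<in> X" "x \<noteq> 0" using ideal_zero[OF X(1)] by blast
    have xD: "x \<in> D" using x(1) ideal_subset[OF X(1)] by blast
    have "(r * e) * x = 0" using rx[OF x(1)] e_mult_D[OF xD] by (simp add: mult.assoc)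
    then show ?thesis using D_no_zero_divisors[OF _ D_mult_right[OF D_unit] xD] X' x(2) by blast
  qed
qed

text \<open>Transport along \<open>eM \<cong> X\<close>: a submodule \<open>N\<close> gives the ideal \<open>J = g(N \<inter> eM) \<subseteq> X\<close>, and
  \<open>J \<subseteq> (J : X) X\<close> pulls back to \<open>N \<inter> eM \<subseteq> (N : M) eM\<close>.\<close>

lemma ideal_prod_pullback:
  assumes g_image: "g ` eM = X"
    and g_add: "\<And>x y. x \<in> eM \<Longrightarrow> y \<in> eM \<Longrightarrow> g (x + y) = g x + g y"
    and g_scale: "\<And>r x. x \<in> eM \<Longrightarrow> g (scale r x) = r * g x"
    and K: "\<And>k. k \<in> K \<Longrightarrow> \<forall>y. scale k y \<in> N"
  shows "t \<in> ideal_prod K X \<Longrightarrow> \<exists>w\<in>eM. g w = t \<and> w \<in> span {scale r m | r m. \<forall>y. scale r y \<in> N}"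
proof (induction t rule: ideal_prod.induct)
  case ideal_prod_zero
  have "g 0 = 0" using g_add[OF eM_zero eM_zero] by simp
  then show ?case using eM_zero span_zero by blast
next
  case (ideal_prod_step k u t)
  then obtain w where w: "w \<in> eM" "g w = t" "w \<in> span {scale r m | r m. \<forall>y. scale r y \<in> N}"
    by blast
  obtain v where v: "v \<in> eM" "g v = u" using ideal_prod_step(2) g_image by blast
  have "scale k v \<in> {scale r m | r m. \<forall>y. scale r y \<in> N}" using K[OF ideal_prod_step(1)] by blast
  then have "scale k v + w \<in> span {scale r m | r m. \<forall>y. scale r y \<in> N}"
    using span_add[OF span_base w(3)] by blast
  moreover have "g (scale k v + w) = k * u + t"
    using g_add[OF eM_scale[OF v(1)] w(1)] g_scale[OF v(1)] v(2) w(2) by simp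
  ultimately show ?case using eM_add[OF eM_scale[OF v(1)] w(1)] by blast
qed

lemma standard_component_span:
  assumes standard_component and N: "subspace N" and z: "z \<in> N"
  shows "scale e z \<in> span {scale r m | r m. \<forall>y. scale r y \<in> N}"
proof -
  obtain X where iso: "module_iso_sets scale eM (*) X" and X: "ideal_in D X"
    and MX: "multiplication_ideal X"
    by (rule standard_componentE[OF assms(1)])
  then obtain g where g: "bij_betw g eM X"
    and g_add: "\<And>x y. x \<in> eM \<Longrightarrow> y \<in> eM \<Longrightarrow> g (x + y) = g x + g y"
    and g_scale: "\<And>r x. x \<in> eM \<Longrightarrow> g (scale r x) = r * g x"
    unfolding module_iso_sets_def by blast
  let ?S = "{scale r m | r m. \<forall>y. scale r y \<in> N}"
  have inj: "inj_on g eM" and g_image: "g ` eM = X" using g by (auto simp: bij_betw_def)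
  let ?J = "g ` (N \<inter> eM)"
  have J: "ideal_in D ?J"
    by (rule ideal_image_submodule[OF _ g_add g_scale N]) (use g_image ideal_subset[OF X] in blast)
  have "g (scale e z) \<in> ideal_prod (colon ?J X) X"
    using MX J g_image subspace_scale[OF N z] unfolding multiplication_ideal_def by blast
  have colon_N: "\<forall>y. scale k y \<in> N" if k: "k \<in> colon ?J X" for k
  proof
    fix y
    have kD: "k \<in> D" using k unfolding colon_def by blast
    have "k * g (scale e y) \<in> ?J" using k g_image unfolding colon_def by blast
    then obtain z' where z': "z' \<in> N" "z' \<in> eM" "g (scale k (scale e y)) = g z'"
      using g_scale[OF rangeI] by auto
    then have "scale k (scale e y) = z'" using inj_onD[OF inj] eM_scale[OF rangeI] by blast
    then show "scale k y \<in> N" using scale_D_eM[OF kD] z'(1) by simp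
  qed
  have "\<exists>w\<in>eM. g w = t \<and> w \<in> span ?S" if "t \<in> ideal_prod (colon ?J X) X" for t
    using ideal_prod_pullback[OF g_image g_add g_scale colon_N that] .
  then obtain w where w: "w \<in> eM" "g w = g (scale e z)" "w \<in> span ?S"
    using \<open>g (scale e z) \<in> ideal_prod (colon ?J X) X\<close> by blast
  have "w = scale e z" by (rule inj_onD[OF inj w(2) w(1) rangeI])
  with w(3) show ?thesis by simp
qed

end

theorem theorem1p3:
  fixes scale :: "'a::comm_ring_1 \<Rightarrow> 'm::ab_group_add \<Rightarrow> 'm"
    and e :: "nat \<Rightarrow> 'a" and n :: nat
  assumes mod: "module scale"
    and idem: "\<And>i. i < n \<Longrightarrow> e i * e i = e i"
    and "\<And>i j. i < n \<Longrightarrow> j < n \<Longrightarrow> i \<noteq> j \<Longrightarrow> e i * e j = 0"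
    and sum1: "(\<Sum>i<n. e i) = 1"
    and factors: "\<And>i. i < n \<Longrightarrow> dedekind_at (e i) \<or> artinian_local_pir_at (e i)"
  shows "(faithful_module scale \<and> multiplication_module scale) \<longleftrightarrow>
    (\<forall>i<n. module_iso_sets scale (range (scale (e i))) (*) (factor_ring (e i))
       \<or> (dedekind_at (e i) \<and>
          (\<exists>I. ideal_in (factor_ring (e i)) I \<and> I \<noteq> {0} \<and>
               module_iso_sets scale (range (scale (e i))) (*) I)))"
proof -
  interpret module scale by (rule mod)
  have component: "factor_module (e i) scale" if "i < n" for i
    using idem[OF that] mod by (simp add: factor_module_def direct_factor_def)
  have "(faithful_module scale \<and> multiplication_module scale) \<longleftrightarrow>
      (\<forall>i<n. factor_module.standard_component (e i) scale)"
  proof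
    assume "faithful_module scale \<and> multiplication_module scale"
    then show "\<forall>i<n. factor_module.standard_component (e i) scale"
      using factor_module.standard_component_if_faithful_multiplication[OF component] factors
      by blast
  next
    assume std: "\<forall>i<n. factor_module.standard_component (e i) scale"
    have "faithful_module scale"
      by (rule faithful_moduleI_idempotents[OF sum1])
        (use factor_module.standard_component_annihilator[OF component] std in blast)
    moreover have "multiplication_module scale"
      by (rule multiplication_moduleI_idempotents[OF sum1])
        (use factor_module.standard_component_span[OF component] std in blast)
    ultimately show "faithful_module scale \<and> multiplication_module scale" by blast
  qed
  then show ?thesis
    using factor_module.standard_component_def[OF component] by simp
qed

end
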